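(* Let $W$ be a suitable basis of $A$ at $\{\beta_1,\ldots,\beta_I\}$. Let $e,\tilde e\in C[x]$ and $M,\tilde M\in C[x]^{r\times r}$ be such that $SW=\frac1eMW$ and $\frac1{\tilde e}\tilde M=(\frac1eM)^{-1}$. Let $p_i\in C[x]$ be the minimal polynomial of $\beta_i$ over $C$. Let $q\in C[x]$, $a\in C[x]^r$ and $\ell\in\mathbb Z$. (i) If $\gcd(q,\sigma^j(p_i))=1$ for all $i\in\{1,\dots,I\}$ and $j\in\mathbb Z$, then there exist $g\in A$ and $c\in C[x]^r$ with $\frac{aW}{\sigma^\ell(q)}=\Delta g+\frac{cW}{qe\tilde e}$. (ii) If $q=p_i^m$ for some $i\in\{1,\dots,I\}$ and $m>0$, then there also exist $g\in A$ and $c\in C[x]^r$ with $\frac{aW}{\sigma^\ell(q)}=\Delta g+\frac{cW}{qe\tilde e}$.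
   Context: Let $C$ be a field of characteristic zero and $\bar C$ its algebraic closure; $\sigma(f)(x)=f(x+1)$ (extended entrywise to vectors/matrices), $C(x)[S]$ the Ore algebra with $Sf=\sigma(f)S$, $\Delta=S-1$. Fix $L=\sum_{i=0}^r\ell_iS^i\in C[x][S]$ with $\ell_0\ell_r\ne0$ and $A=C(x)[S]/C(x)[S]L$. For a basis $W=(\omega_1,\dots,\omega_r)$, $a\in C[x]^r$, $u\in C[x]$: $\frac{aW}{u}=\frac1u\sum a_i\omega_i$, $SW=(S\omega_i)_i$. For $\alpha\in\bar C$, operators $P=\sum p_iS^i$ act on $b:\alpha+\mathbb Z\to\bar C((q))$ by $(P\cdot b)(z)=\sum p_i(z+q)b(z+i)$; $\operatorname{Sol}_\alpha(L)=\{b:L\cdot b=0\}$; $\operatorname{val}_\alpha(f)=\min_{b\in\operatorname{Sol}_\alpha(L)}(\nu_q((f\cdot b)(\alpha))-\liminf_n\nu_q(b(\alpha-n)))$; $f$ integral at $\alpha$ iff $\operatorname{val}_\alpha(f)\ge0$; a local integral basis at $\alpha$ is a basis of the $C(x)_\alpha$-module of integral elements ($C(x)_\alpha=\{p/q:q(\alpha)\ne0\}$), and at a set if at each point. On $\alpha+\mathbb Z$, $\beta<\gamma$ means $\beta-\gamma$ is a negative integer. Suitable bases: let $\alpha_1+\mathbb Z,\dots,\alpha_I+\mathbb Z$ be the distinct orbits containing a root of $\ell_0\ell_r$; in orbit $i$ let $\alpha_{i,1}<\dots<\alpha_{i,J_i}$ be these roots, and choose $\beta_i\in\alpha_i+\mathbb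 Z$ with $\alpha_{i,J_i}\le\beta_i$, such that if $\alpha_{i,J_i},\alpha_{i',J_{i'}}$ are $C$-conjugate then $\beta_i-\alpha_{i,J_i}=\beta_{i'}-\alpha_{i',J_{i'}}$. Let $Z=\bigcup_i\{\gamma\in\alpha_i+\mathbb Z\mid\alpha_{i,1}<\gamma\le\beta_i\}$. A $C(x)$-basis $W$ of $A$ is suitable at $\{\beta_1,\dots,\beta_I\}$ if it is a local integral basis at $Z$ and generates the same $C(x)_\alpha$-module as $\{1,S,\dots,S^{r-1}\}$ for every $\alpha\in\bar C\setminus Z$. *)

theory Defs
  imports "HOL-Algebra.Algebraic_Closure_Type"
          "HOL-Computational_Algebra.Formal_Laurent_Series"
          "HOL-Computational_Algebra.Polynomial_FPS"
          "HOL-Library.Liminf_Limsup"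
          "HOL-Library.Extended_Real"
begin

(* C       : a type 'c :: field_char_0 (with the trivial field gcd instance, so that gcd on C[x] exists)
   C[x]    : 'c poly
   C(x)    : 'c poly fract
   \<bar>C    : 'c alg_closure, with embedding to_ac :: 'c \<Rightarrow> 'c alg_closure
   L = \<Sum>_{i=0}^r l i S^i
   A = C(x)[S]/C(x)[S]L is modelled by coordinates w.r.t. the C(x)-basis 1,S,...,S^(r-1):
       an element is a function nat \<Rightarrow> C(x); only the coordinates k < r matter.
   A family W = (\<omega>_1,...,\<omega>_r) is a function nat \<Rightarrow> element, \<omega>_(i+1) = W i (i < r). *)

type_synonym 'c elt = "nat \<Rightarrow> 'c poly fract"

definition polyf :: "'c::idom poly \<Rightarrow> 'c poly fract" where
  "polyf p = Fract p 1"

definition shiftp :: "int \<Rightarrow> 'c::comm_ring_1 poly \<Rightarrow> 'c poly" where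
  "shiftp j p = pcompose p [:of_int j, 1:]"

definition frep :: "'a::idom fract \<Rightarrow> 'a \<times> 'a" where
  "frep f = (SOME nd. snd nd \<noteq> 0 \<and> f = Fract (fst nd) (snd nd))"

definition shiftf :: "int \<Rightarrow> 'c::field poly fract \<Rightarrow> 'c poly fract" where
  "shiftf j f = Fract (shiftp j (fst (frep f))) (shiftp j (snd (frep f)))"

definition eqA :: "nat \<Rightarrow> 'c::field elt \<Rightarrow> 'c elt \<Rightarrow> bool" where
  "eqA r f g \<longleftrightarrow> (\<forall>k<r. f k = g k)"

(* left multiplication by S in A:  S (\<Sum> f_i S^i) = \<Sum> \<sigma>(f_i) S^(i+1),  S^r = -\<Sum>_{i<r} (l_i/l_r) S^i *)
definition Sact :: "(nat \<Rightarrow> 'c::field poly) \<Rightarrow> nat \<Rightarrow> 'c elt \<Rightarrow> 'c elt" where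
  "Sact l r f = (\<lambda>k. (if k = 0 then 0 else shiftf 1 (f (k - 1)))
                     - shiftf 1 (f (r - 1)) * polyf (l k) / polyf (l r))"

definition Delta :: "(nat \<Rightarrow> 'c::field poly) \<Rightarrow> nat \<Rightarrow> 'c elt \<Rightarrow> 'c elt" where
  "Delta l r g = (\<lambda>k. Sact l r g k - g k)"

definition addA :: "'c::field elt \<Rightarrow> 'c elt \<Rightarrow> 'c elt" where
  "addA f g = (\<lambda>k. f k + g k)"

definition comb :: "nat \<Rightarrow> (nat \<Rightarrow> 'c::field poly fract) \<Rightarrow> (nat \<Rightarrow> 'c elt) \<Rightarrow> 'c elt" where
  "comb r c W = (\<lambda>k. \<Sum>i<r. c i * W i k)"

definition fracA :: "nat \<Rightarrow> 'c::field poly \<Rightarrow> (nat \<Rightarrow> 'c poly) \<Rightarrow> (nat \<Rightarrow> 'c elt) \<Rightarrow> 'c elt" where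
  "fracA r u a W = (\<lambda>k. (\<Sum>i<r. polyf (a i) * W i k) / polyf u)"

definition is_basisA :: "nat \<Rightarrow> (nat \<Rightarrow> 'c::field elt) \<Rightarrow> bool" where
  "is_basisA r W \<longleftrightarrow>
     (\<forall>c. eqA r (comb r c W) (\<lambda>_. 0) \<longrightarrow> (\<forall>i<r. c i = 0)) \<and>
     (\<forall>f. \<exists>c. eqA r f (comb r c W))"

(* p(z+q) \<in> \<bar>C((q)) for p \<in> C[x], z \<in> \<bar>C *)
definition poly_at_shift :: "'c::field poly \<Rightarrow> 'c alg_closure \<Rightarrow> 'c alg_closure fls" where
  "poly_at_shift p z = fps_to_fls (fps_of_poly (pcompose (map_poly to_ac p) [:z, 1:]))"

definition rat_at_shift :: "'c::field poly fract \<Rightarrow> 'c alg_closure \<Rightarrow> 'c alg_closure fls" where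
  "rat_at_shift f z = poly_at_shift (fst (frep f)) z / poly_at_shift (snd (frep f)) z"

definition nu_q :: "'a::zero fls \<Rightarrow> ereal" where
  "nu_q f = (if f = 0 then \<infinity> else ereal (of_int (fls_subdegree f)))"

(* Sol_\<alpha>(L): b n stands for b(\<alpha>+n) *)
definition SolA :: "(nat \<Rightarrow> 'c::field poly) \<Rightarrow> nat \<Rightarrow> 'c alg_closure
                      \<Rightarrow> (int \<Rightarrow> 'c alg_closure fls) set" where
  "SolA l r \<alpha> = {b. \<forall>n::int. (\<Sum>i\<le>r. poly_at_shift (l i) (\<alpha> + of_int n) * b (n + int i)) = 0}"

definition act_at :: "nat \<Rightarrow> 'c::field elt \<Rightarrow> 'c alg_closure \<Rightarrow> (int \<Rightarrow> 'c alg_closure fls)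
                      \<Rightarrow> 'c alg_closure fls" where
  "act_at r f \<alpha> b = (\<Sum>i<r. rat_at_shift (f i) \<alpha> * b (int i))"

definition valA :: "(nat \<Rightarrow> 'c::field poly) \<Rightarrow> nat \<Rightarrow> 'c alg_closure \<Rightarrow> 'c elt \<Rightarrow> ereal" where
  "valA l r \<alpha> f = (INF b \<in> SolA l r \<alpha> - {\<lambda>_. 0}.
       nu_q (act_at r f \<alpha> b) - liminf (\<lambda>n::nat. nu_q (b (- int n))))"

definition integral_at :: "(nat \<Rightarrow> 'c::field poly) \<Rightarrow> nat \<Rightarrow> 'c alg_closure \<Rightarrow> 'c elt \<Rightarrow> bool" where
  "integral_at l r \<alpha> f \<longleftrightarrow> valA l r \<alpha> f \<ge> 0"

definition loc_ring :: "'c::field alg_closure \<Rightarrow> 'c poly fract set" where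
  "loc_ring \<alpha> = {f. \<exists>n d. poly (map_poly to_ac d) \<alpha> \<noteq> 0 \<and> f = Fract n d}"

definition local_integral_basis ::
    "(nat \<Rightarrow> 'c::field poly) \<Rightarrow> nat \<Rightarrow> 'c alg_closure \<Rightarrow> (nat \<Rightarrow> 'c elt) \<Rightarrow> bool" where
  "local_integral_basis l r \<alpha> W \<longleftrightarrow>
     (\<forall>i<r. integral_at l r \<alpha> (W i)) \<and>
     (\<forall>f. integral_at l r \<alpha> f \<longrightarrow> (\<exists>c. (\<forall>i<r. c i \<in> loc_ring \<alpha>) \<and> eqA r f (comb r c W))) \<and>
     (\<forall>c. (\<forall>i<r. c i \<in> loc_ring \<alpha>) \<longrightarrow> eqA r (comb r c W) (\<lambda>_. 0) \<longrightarrow> (\<forall>i<r. c i = 0))"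

definition same_module_as_std :: "nat \<Rightarrow> 'c::field alg_closure \<Rightarrow> (nat \<Rightarrow> 'c elt) \<Rightarrow> bool" where
  "same_module_as_std r \<alpha> W \<longleftrightarrow>
     (\<forall>f. (\<exists>c. (\<forall>i<r. c i \<in> loc_ring \<alpha>) \<and> eqA r f (comb r c W))
          \<longleftrightarrow> (\<exists>c. (\<forall>i<r. c i \<in> loc_ring \<alpha>) \<and> (\<forall>k<r. f k = c k)))"

definition same_orbit :: "'a::ring_1 \<Rightarrow> 'a \<Rightarrow> bool" where
  "same_orbit z w \<longleftrightarrow> (\<exists>k::int. z - w = of_int k)"

definition orb_lt :: "'a::ring_1 \<Rightarrow> 'a \<Rightarrow> bool" where
  "orb_lt z w \<longleftrightarrow> (\<exists>n::nat. n > 0 \<and> z - w = - of_nat n)"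

definition orb_le :: "'a::ring_1 \<Rightarrow> 'a \<Rightarrow> bool" where
  "orb_le z w \<longleftrightarrow> z = w \<or> orb_lt z w"

definition rootsL :: "(nat \<Rightarrow> 'c::field poly) \<Rightarrow> nat \<Rightarrow> 'c alg_closure set" where
  "rootsL l r = {z. poly (map_poly to_ac (l 0 * l r)) z = 0}"

definition orbit_min :: "'a::ring_1 set \<Rightarrow> 'a \<Rightarrow> 'a" where
  "orbit_min R b = (THE \<rho>. \<rho> \<in> R \<and> same_orbit \<rho> b \<and> (\<forall>\<rho>'\<in>R. same_orbit \<rho>' b \<longrightarrow> orb_le \<rho> \<rho>'))"

definition orbit_max :: "'a::ring_1 set \<Rightarrow> 'a \<Rightarrow> 'a" where
  "orbit_max R b = (THE \<rho>. \<rho> \<in> R \<and> same_orbit \<rho> b \<and> (\<forall>\<rho>'\<in>R. same_orbit \<rho>' b \<longrightarrow> orb_le \<rho>' \<rho>))"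

definition is_min_poly :: "'c::field alg_closure \<Rightarrow> 'c poly \<Rightarrow> bool" where
  "is_min_poly z p \<longleftrightarrow> lead_coeff p = 1 \<and> poly (map_poly to_ac p) z = 0 \<and>
      (\<forall>q. q \<noteq> 0 \<and> poly (map_poly to_ac q) z = 0 \<longrightarrow> degree p \<le> degree q)"

definition C_conjugate :: "'c::field alg_closure \<Rightarrow> 'c alg_closure \<Rightarrow> bool" where
  "C_conjugate z w \<longleftrightarrow> (\<exists>p. is_min_poly z p \<and> is_min_poly w p)"

(* \<beta>_1,...,\<beta>_I (here \<beta> 0, ..., \<beta> (I-1)) chosen as required *)
definition admissible_betas ::
    "(nat \<Rightarrow> 'c::field poly) \<Rightarrow> nat \<Rightarrow> nat \<Rightarrow> (nat \<Rightarrow> 'c alg_closure) \<Rightarrow> bool" where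
  "admissible_betas l r I \<beta> \<longleftrightarrow>
     (let R = rootsL l r in
       (\<forall>i<I. \<exists>\<rho>\<in>R. same_orbit \<rho> (\<beta> i)) \<and>
       (\<forall>\<rho>\<in>R. \<exists>i<I. same_orbit \<rho> (\<beta> i)) \<and>
       (\<forall>i<I. \<forall>j<I. i \<noteq> j \<longrightarrow> \<not> same_orbit (\<beta> i) (\<beta> j)) \<and>
       (\<forall>i<I. orb_le (orbit_max R (\<beta> i)) (\<beta> i)) \<and>
       (\<forall>i<I. \<forall>i'<I. C_conjugate (orbit_max R (\<beta> i)) (orbit_max R (\<beta> i')) \<longrightarrow>
            \<beta> i - orbit_max R (\<beta> i) = \<beta> i' - orbit_max R (\<beta> i')))"

definition Zset :: "(nat \<Rightarrow> 'c::field poly) \<Rightarrow> nat \<Rightarrow> nat \<Rightarrow> (nat \<Rightarrow> 'c alg_closure)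
                     \<Rightarrow> 'c alg_closure set" where
  "Zset l r I \<beta> = {\<gamma>. \<exists>i<I. same_orbit \<gamma> (\<beta> i) \<and>
       orb_lt (orbit_min (rootsL l r) (\<beta> i)) \<gamma> \<and> orb_le \<gamma> (\<beta> i)}"

definition suitable_basis ::
    "(nat \<Rightarrow> 'c::field poly) \<Rightarrow> nat \<Rightarrow> nat \<Rightarrow> (nat \<Rightarrow> 'c alg_closure) \<Rightarrow> (nat \<Rightarrow> 'c elt) \<Rightarrow> bool" where
  "suitable_basis l r I \<beta> W \<longleftrightarrow>
     is_basisA r W \<and>
     (\<forall>\<alpha>\<in>Zset l r I \<beta>. local_integral_basis l r \<alpha> W) \<and>
     (\<forall>\<alpha>. \<alpha> \<notin> Zset l r I \<beta> \<longrightarrow> same_module_as_std r \<alpha> W)"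

end

theory Submission
  imports Defs "HOL-Computational_Algebra.Normalized_Fraction"
begin

text \<open>
  Write \<open>S W = (M/e) W\<close> and \<open>N = (M/e)\<^sup>-\<^sup>1 = M\<^sub>t/e\<^sub>t\<close>. Since
  \<open>\<Delta>(x W) = \<sigma>(x) (M/e) W - x W\<close>, an element \<open>a W / Q\<close> can be exchanged, modulo the image of
  \<open>\<Delta>\<close>, for one with denominator \<open>\<sigma>\<^sup>-\<^sup>1(Q)\<close> (using \<open>N\<close>) or \<open>\<sigma>(Q)\<close> (using \<open>M/e\<close>), up to a
  part whose denominator divides \<open>e e\<^sub>t\<close>. The exchange only needs the entries of \<open>N\<close>
  (resp. \<open>M/e\<close>) to be regular at the roots of \<open>Q\<close> (resp. \<open>\<sigma>(Q)\<close>): a common denominator of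
  these entries is then coprime to \<open>Q\<close> (resp. \<open>\<sigma>(Q)\<close>), and a Bezout identity splits the
  fraction. Iterating moves \<open>\<sigma>\<^sup>\<ell>(q)\<close> back to \<open>q\<close>.

  Regularity at \<open>z\<close> comes from the suitable basis at \<open>z\<close> and \<open>z + 1\<close>. Outside \<open>Z\<close> and the
  roots of \<open>\<ell>\<^sub>0 \<ell>\<^sub>r\<close> the basis spans the same local module as \<open>1, S, \<dots>, S\<^sup>r\<^sup>-\<^sup>1\<close>, which
  \<open>S\<close> and \<open>S\<^sup>-\<^sup>1\<close> preserve; on \<open>Z\<close> it is a local integral basis, and \<open>S h\<close> integral at \<open>z\<close>
  forces \<open>h\<close> integral at \<open>z + 1\<close>. In case (i) no root of a shift of \<open>q\<close> lies in the orbit of a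
  \<open>\<beta>\<^sub>i\<close>. In case (ii) every root of \<open>p\<^sub>i\<close> is \<open>C\<close>-conjugate to \<open>\<beta>\<^sub>i\<close>, and admissibility of the
  \<open>\<beta>\<close>'s makes it some \<open>\<beta>\<^sub>i\<^sub>'\<close> itself; the points met when shifting down lie below \<open>\<beta>\<^sub>i\<^sub>'\<close>,
  those met when shifting up lie above \<open>\<beta>\<^sub>i\<^sub>'\<close> and hence outside \<open>Z\<close> and the roots of
  \<open>\<ell>\<^sub>0 \<ell>\<^sub>r\<close>.
\<close>

abbreviation ac_poly :: "'c::field poly \<Rightarrow> 'c alg_closure poly" where
  "ac_poly p \<equiv> map_poly to_ac p"

lemma coeff_ac_poly: "coeff (ac_poly p) n = to_ac (coeff p n)"
  by (simp add: coeff_map_poly)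

lemma ac_poly_add: "ac_poly (p + q) = ac_poly p + ac_poly q"
  by (rule poly_eqI) (simp add: coeff_ac_poly)

lemma ac_poly_minus: "ac_poly (- p) = - ac_poly p"
  by (rule poly_eqI) (simp add: coeff_ac_poly)

lemma ac_poly_mult: "ac_poly (p * q) = ac_poly p * ac_poly q"
  by (rule poly_eqI) (simp only: coeff_ac_poly coeff_mult to_ac_sum to_ac_mult)

lemma ac_poly_power: "ac_poly (p ^ n) = ac_poly p ^ n"
  by (induction n) (simp_all add: ac_poly_mult)

lemma ac_poly_pcompose: "ac_poly (pcompose p q) = pcompose (ac_poly p) (ac_poly q)"
  by (induction p) (simp_all add: pcompose_pCons map_poly_pCons ac_poly_add ac_poly_mult)

lemma ac_poly_eq_0_iff: "ac_poly p = 0 \<longleftrightarrow> p = 0"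
  by (simp add: map_poly_eq_0_iff)

lemma coprime_bezout:
  fixes p q :: "'c::{field_char_0,field_gcd} poly"
  assumes "coprime p q" obtains u v where "u * p + v * q = 1"
  using bezout_coefficients_fst_snd[of p q] assms by (metis coprime_iff_gcd_eq_1)

lemma not_coprime_if_common_root:
  fixes p q :: "'c::{field_char_0,field_gcd} poly"
  assumes "poly (ac_poly p) z = 0" "poly (ac_poly q) z = 0"
  shows "\<not> coprime p q"
proof
  assume "coprime p q"
  then obtain u v where "u * p + v * q = 1" by (rule coprime_bezout)
  hence "poly (ac_poly (u * p + v * q)) z = 1" by simp
  thus False using assms by (simp add: ac_poly_add ac_poly_mult)
qed

lemma coprime_if_no_common_root:
  fixes p q :: "'c::{field_char_0,field_gcd} poly"
  assumes "q \<noteq> 0" "\<And>z. poly (ac_poly q) z = 0 \<Longrightarrow> poly (ac_poly p) z \<noteq> 0"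
  shows "coprime p q"
proof -
  define g where "g = gcd p q"
  have g0: "g \<noteq> 0" using assms(1) by (simp add: g_def)
  show ?thesis
  proof (cases "degree g = 0")
    case True
    hence "is_unit g" using g0 by (simp add: is_unit_iff_degree)
    thus ?thesis unfolding g_def by (metis is_unit_gcd)
  next
    case False
    hence "degree (ac_poly g) > 0" by (simp add: degree_map_poly)
    then obtain z where z: "poly (ac_poly g) z = 0" using alg_closed_imp_poly_has_root by blast
    obtain a b where "q = g * a" "p = g * b" unfolding g_def by (meson dvd_def gcd_dvd1 gcd_dvd2)
    hence "poly (ac_poly q) z = 0" "poly (ac_poly p) z = 0" using z by (simp_all add: ac_poly_mult)
    thus ?thesis using assms(2) by blast
  qed
qed

lemma min_poly_nonzero: "is_min_poly z p \<Longrightarrow> p \<noteq> 0"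
  by (auto simp: is_min_poly_def)

lemma min_poly_dvd:
  fixes p :: "'c::{field_char_0,field_gcd} poly"
  assumes mp: "is_min_poly z p" and root: "poly (ac_poly P) z = 0"
  shows "p dvd P"
proof (rule ccontr)
  assume "\<not> p dvd P"
  hence nz: "P mod p \<noteq> 0" by (simp add: dvd_eq_mod_eq_0)
  have "P = p * (P div p) + P mod p" by simp
  hence "poly (ac_poly (P mod p)) z = 0"
    using mp root by (metis ac_poly_add ac_poly_mult add_0 mult_zero_left is_min_poly_def poly_add poly_mult)
  hence "degree p \<le> degree (P mod p)" using mp nz unfolding is_min_poly_def by blast
  moreover have "degree (P mod p) < degree p" by (rule degree_mod_less'[OF min_poly_nonzero[OF mp] nz])
  ultimately show False by simp
qed

lemma min_poly_root_transfer:
  fixes p :: "'c::{field_char_0,field_gcd} poly"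
  assumes "is_min_poly z p" "poly (ac_poly P) z = 0" "poly (ac_poly p) w = 0"
  shows "poly (ac_poly P) w = 0"
  using min_poly_dvd[OF assms(1,2)] assms(3) by (auto simp: ac_poly_mult elim!: dvdE)

lemma min_poly_of_root:
  fixes p :: "'c::{field_char_0,field_gcd} poly"
  assumes mp: "is_min_poly z p" and w: "poly (ac_poly p) w = 0"
  shows "is_min_poly w p"
  unfolding is_min_poly_def
proof (intro conjI allI impI)
  show "lead_coeff p = 1" "poly (ac_poly p) w = 0" using mp w by (auto simp: is_min_poly_def)
  fix Q assume Q: "Q \<noteq> 0 \<and> poly (ac_poly Q) w = 0"
  define g where "g = gcd p Q"
  have "\<not> coprime p Q" using w Q by (intro not_coprime_if_common_root) auto
  hence "\<not> is_unit g" unfolding g_def by (metis is_unit_gcd)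
  moreover have g0: "g \<noteq> 0" using min_poly_nonzero[OF mp] by (simp add: g_def)
  ultimately have "0 < degree g" by (simp add: is_unit_iff_degree)
  obtain h where h: "p = g * h" unfolding g_def by (meson dvd_def gcd_dvd1)
  have "poly (ac_poly g) z = 0"
  proof (rule ccontr)
    assume "poly (ac_poly g) z \<noteq> 0"
    hence "poly (ac_poly h) z = 0" using mp h by (simp add: is_min_poly_def ac_poly_mult)
    moreover have "h \<noteq> 0" using h min_poly_nonzero[OF mp] by auto
    ultimately have "degree p \<le> degree h" using mp unfolding is_min_poly_def by blast
    thus False using h \<open>0 < degree g\<close> min_poly_nonzero[OF mp] by (simp add: degree_mult_eq)
  qed
  hence "degree p \<le> degree g" using mp g0 unfolding is_min_poly_def by blast
  also have "degree g \<le> degree Q" using Q unfolding g_def by (intro dvd_imp_degree_le) auto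
  finally show "degree p \<le> degree Q" .
qed

lemma poly_ac_poly_shiftp: "poly (ac_poly (shiftp j p)) z = poly (ac_poly p) (z + of_int j)"
  by (simp add: shiftp_def ac_poly_pcompose poly_pcompose map_poly_pCons algebra_simps)

lemma shiftp_add: "shiftp j (p + q) = shiftp j p + shiftp j q"
  by (simp add: shiftp_def pcompose_add)

lemma shiftp_mult: "shiftp j (p * q) = shiftp j p * shiftp j q"
  by (simp add: shiftp_def pcompose_mult)

lemma shiftp_minus: "shiftp j (- p) = - shiftp j p"
  by (simp add: shiftp_def pcompose_uminus)

lemma shiftp_1 [simp]: "shiftp j 1 = 1"
  by (simp add: shiftp_def pcompose_1)

lemma shiftp_shiftp: "shiftp j (shiftp k p) = shiftp (j + k) (p :: 'a::comm_ring_1 poly)"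
  by (simp add: shiftp_def pcompose_assoc[symmetric] pcompose_pCons algebra_simps)

lemma shiftp_0_left [simp]: "shiftp 0 p = p"
  by (simp add: shiftp_def)

lemma shiftp_eq_0_iff [simp]: "shiftp j (p :: 'a::idom poly) = 0 \<longleftrightarrow> p = 0"
  by (simp add: shiftp_def pcompose_eq_0_iff)

lemma degree_shiftp: "degree (shiftp j (p :: 'a::idom poly)) = degree p"
  by (simp add: shiftp_def degree_pcompose)

lemma min_poly_shiftp:
  assumes mp: "is_min_poly z p" shows "is_min_poly (z - of_int t) (shiftp t p)"
  unfolding is_min_poly_def
proof (intro conjI allI impI)
  show "lead_coeff (shiftp t p) = 1" using mp by (simp add: is_min_poly_def shiftp_def lead_coeff_comp)
  show "poly (ac_poly (shiftp t p)) (z - of_int t) = 0"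
    using mp by (simp add: poly_ac_poly_shiftp is_min_poly_def)
  fix Q assume Q: "Q \<noteq> 0 \<and> poly (ac_poly Q) (z - of_int t) = 0"
  hence "degree p \<le> degree (shiftp (-t) Q)"
    using mp unfolding is_min_poly_def by (simp add: poly_ac_poly_shiftp)
  thus "degree (shiftp t p) \<le> degree Q" by (simp add: degree_shiftp)
qed

lemma polyf_add: "polyf (p + q) = polyf p + polyf q" by (simp add: polyf_def)
lemma polyf_mult: "polyf (p * q) = polyf p * polyf q" by (simp add: polyf_def)
lemma polyf_0 [simp]: "polyf 0 = 0" by (simp add: polyf_def Zero_fract_def)
lemma polyf_1 [simp]: "polyf 1 = 1" by (simp add: polyf_def One_fract_def)
lemma polyf_eq_0_iff [simp]: "polyf p = 0 \<longleftrightarrow> p = 0" by (simp add: polyf_def Zero_fract_def eq_fract)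

lemma polyf_sum: "polyf (sum f A) = sum (\<lambda>i. polyf (f i)) A"
  by (induction A rule: infinite_finite_induct) (simp_all add: polyf_add)

lemma polyf_mult_Fract: "d \<noteq> 0 \<Longrightarrow> polyf d * Fract n d = polyf n"
  by (simp add: polyf_def eq_fract)

lemma frep: "snd (frep f) \<noteq> 0 \<and> f = Fract (fst (frep f)) (snd (frep f))"
  unfolding frep_def
proof (rule someI_ex)
  obtain a b where "f = Fract a b" "b \<noteq> 0" by (cases f) auto
  thus "\<exists>nd. snd nd \<noteq> 0 \<and> f = Fract (fst nd) (snd nd)" by (intro exI[of _ "(a, b)"]) auto
qed

lemma frep_cases:
  assumes "d \<noteq> 0"
  obtains n' d' where "frep (Fract n d) = (n', d')" "d' \<noteq> 0" "n * d' = n' * d"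
proof -
  obtain n' d' where fr: "frep (Fract n d) = (n', d')" by (cases "frep (Fract n d)")
  with frep[of "Fract n d"] have "d' \<noteq> 0" "Fract n d = Fract n' d'" by auto
  with assms fr that show thesis by (simp add: eq_fract)
qed

lemma shiftf_Fract:
  fixes n d :: "'c::field poly"
  assumes "d \<noteq> 0" shows "shiftf j (Fract n d) = Fract (shiftp j n) (shiftp j d)"
proof -
  obtain n' d' where fr: "frep (Fract n d) = (n', d')" "d' \<noteq> 0" "n * d' = n' * d"
    using assms by (rule frep_cases)
  hence "shiftp j n * shiftp j d' = shiftp j n' * shiftp j d" by (metis shiftp_mult)
  thus ?thesis using assms fr by (simp add: shiftf_def eq_fract)
qed

lemma shiftf_polyf: "shiftf j (polyf p) = polyf (shiftp j p)"
  by (simp add: polyf_def shiftf_Fract)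

lemma shiftf_add: "shiftf j (x + y) = shiftf j x + shiftf j (y :: 'c::field poly fract)"
  by (cases x, cases y) (simp add: shiftf_Fract shiftp_add shiftp_mult)

lemma shiftf_mult: "shiftf j (x * y) = shiftf j x * shiftf j (y :: 'c::field poly fract)"
  by (cases x, cases y) (simp add: shiftf_Fract shiftp_mult)

lemma shiftf_minus: "shiftf j (- x) = - shiftf j (x :: 'c::field poly fract)"
  by (cases x) (simp add: shiftf_Fract shiftp_minus)

lemma shiftf_diff: "shiftf j (x - y) = shiftf j x - shiftf j (y :: 'c::field poly fract)"
  by (simp only: diff_conv_add_uminus shiftf_add shiftf_minus)

lemma shiftf_0 [simp]: "shiftf j (0 :: 'c::field poly fract) = 0"
  by (metis polyf_0 shiftf_polyf shiftp_eq_0_iff)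

lemma shiftf_inverse: "shiftf j (inverse x) = inverse (shiftf j (x :: 'c::field poly fract))"
proof (cases x)
  case (Fract a b)
  show ?thesis
  proof (cases "a = 0")
    case True
    thus ?thesis using Fract by (metis fract_collapse(1) inverse_zero shiftf_0)
  next
    case False
    thus ?thesis using Fract by (simp only: inverse_fract shiftf_Fract shiftp_eq_0_iff not_False_eq_True)
  qed
qed

lemma shiftf_divide: "shiftf j (x / y) = shiftf j x / shiftf j (y :: 'c::field poly fract)"
  by (simp only: divide_inverse shiftf_mult shiftf_inverse)

lemma shiftf_sum: "shiftf j (sum f A) = sum (\<lambda>i. shiftf j (f i :: 'c::field poly fract)) A"
  by (induction A rule: infinite_finite_induct) (simp_all add: shiftf_add)

lemma shiftf_shiftf: "shiftf j (shiftf k x) = shiftf (j + k) (x :: 'c::field poly fract)"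
  by (cases x) (simp add: shiftf_Fract shiftp_shiftp)

lemma shiftf_0_left [simp]: "shiftf 0 x = (x :: 'c::field poly fract)"
  by (cases x) (simp add: shiftf_Fract)

lemma loc_ringI: "poly (ac_poly d) z \<noteq> 0 \<Longrightarrow> Fract n d \<in> loc_ring z"
  by (auto simp: loc_ring_def)

lemma loc_ringE:
  assumes "f \<in> loc_ring z"
  obtains n d where "poly (ac_poly d) z \<noteq> 0" "d \<noteq> 0" "f = Fract n d"
proof -
  from assms obtain n d where "poly (ac_poly d) z \<noteq> 0" "f = Fract n d" by (auto simp: loc_ring_def)
  moreover from this have "d \<noteq> 0" by auto
  ultimately show thesis using that by blast
qed

lemma loc_ring_polyf: "polyf p \<in> loc_ring z"
  unfolding polyf_def by (rule loc_ringI) simp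

lemma loc_ring_0: "0 \<in> loc_ring z"
  using loc_ring_polyf[of 0] by simp

lemma loc_ring_1: "1 \<in> loc_ring z"
  using loc_ring_polyf[of 1] by simp

lemma loc_ring_mult: "f \<in> loc_ring z \<Longrightarrow> g \<in> loc_ring z \<Longrightarrow> f * g \<in> loc_ring z"
  by (elim loc_ringE) (auto intro!: loc_ringI simp: ac_poly_mult)

lemma loc_ring_diff: "f \<in> loc_ring z \<Longrightarrow> g \<in> loc_ring z \<Longrightarrow> f - g \<in> loc_ring z"
  by (elim loc_ringE) (auto intro!: loc_ringI simp: ac_poly_mult)

lemma loc_ring_divide: "f \<in> loc_ring z \<Longrightarrow> poly (ac_poly d) z \<noteq> 0 \<Longrightarrow> f / polyf d \<in> loc_ring z"
  by (elim loc_ringE) (auto intro!: loc_ringI simp: ac_poly_mult polyf_def)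

lemma loc_ring_shiftf: "f \<in> loc_ring (z + of_int j) \<Longrightarrow> shiftf j f \<in> loc_ring z"
  by (elim loc_ringE) (auto intro!: loc_ringI simp: shiftf_Fract poly_ac_poly_shiftp)

lemma loc_ring_reduced_denominator:
  fixes f :: "'c::{field_char_0,field_gcd} poly fract"
  obtains n d where "d \<noteq> 0" "f = Fract n d" "\<And>z. f \<in> loc_ring z \<Longrightarrow> poly (ac_poly d) z \<noteq> 0"
proof -
  obtain n d where nd: "quot_of_fract f = (n, d)" by (cases "quot_of_fract f")
  hence "(n, d) \<in> normalized_fracts" using quot_of_fract_in_normalized_fracts[of f] by simp
  hence cop: "coprime n d" and d0: "d \<noteq> 0" by (auto simp: normalized_fracts_def)
  have f: "f = Fract n d" using quot_to_fract_quot_of_fract[of f] nd by (simp add: quot_to_fract_def)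
  show ?thesis
  proof (rule that[OF d0 f])
    fix z assume "f \<in> loc_ring z"
    then obtain n' d' where d': "poly (ac_poly d') z \<noteq> 0" "d' \<noteq> 0" "f = Fract n' d'"
      by (elim loc_ringE)
    hence "d dvd n * d'" using f d0 by (simp add: eq_fract)
    hence "d dvd d'" using cop by (simp add: coprime_dvd_mult_right_iff coprime_commute)
    thus "poly (ac_poly d) z \<noteq> 0" using d' by (auto simp: ac_poly_mult elim!: dvdE)
  qed
qed

lemma common_denominator_coprime:
  fixes f :: "'i \<Rightarrow> 'c::{field_char_0,field_gcd} poly fract" and Q :: "'c poly"
  assumes "finite I" "Q \<noteq> 0" "\<And>i z. i \<in> I \<Longrightarrow> poly (ac_poly Q) z = 0 \<Longrightarrow> f i \<in> loc_ring z"
  obtains D n where "coprime D Q" "\<And>i. i \<in> I \<Longrightarrow> polyf D * f i = polyf (n i)"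
proof -
  have "\<exists>nd. snd nd \<noteq> 0 \<and> g = Fract (fst nd) (snd nd) \<and>
           (\<forall>z. g \<in> loc_ring z \<longrightarrow> poly (ac_poly (snd nd)) z \<noteq> 0)" for g :: "'c poly fract"
  proof -
    obtain n d where "d \<noteq> 0" "g = Fract n d" "\<And>z. g \<in> loc_ring z \<Longrightarrow> poly (ac_poly d) z \<noteq> 0"
      using loc_ring_reduced_denominator[of g] by blast
    thus ?thesis by (intro exI[of _ "(n, d)"]) auto
  qed
  then obtain R :: "'c poly fract \<Rightarrow> 'c poly \<times> 'c poly" where
    "\<forall>g. snd (R g) \<noteq> 0 \<and> g = Fract (fst (R g)) (snd (R g)) \<and>
       (\<forall>z. g \<in> loc_ring z \<longrightarrow> poly (ac_poly (snd (R g))) z \<noteq> 0)"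
    by metis
  hence R: "\<And>g. snd (R g) \<noteq> 0" "\<And>g. g = Fract (fst (R g)) (snd (R g))"
    "\<And>g z. g \<in> loc_ring z \<Longrightarrow> poly (ac_poly (snd (R g))) z \<noteq> 0"
    by blast+
  define D where "D = (\<Prod>i\<in>I. snd (R (f i)))"
  define n where "n i = (\<Prod>k\<in>I - {i}. snd (R (f k))) * fst (R (f i))" for i
  show thesis
  proof
    show "coprime D Q"
      unfolding D_def using assms(2,3) R(3) by (intro prod_coprime_left coprime_if_no_common_root) auto
    fix i assume i: "i \<in> I"
    have "D = snd (R (f i)) * (\<Prod>k\<in>I - {i}. snd (R (f k)))"
      unfolding D_def using i assms(1) by (simp add: prod.remove)
    hence "polyf D * f i
        = polyf (\<Prod>k\<in>I - {i}. snd (R (f k))) * (polyf (snd (R (f i))) * Fract (fst (R (f i))) (snd (R (f i))))"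
      using R(2)[of "f i"] by (simp add: polyf_mult mult_ac)
    thus "polyf D * f i = polyf (n i)"
      by (simp add: polyf_mult_Fract[OF R(1)] polyf_mult n_def)
  qed
qed

section \<open>Evaluation at \<open>z + q\<close> and the \<open>q\<close>-adic valuation\<close>

lemma poly_at_shift_mult: "poly_at_shift (p * q) z = poly_at_shift p z * poly_at_shift q z"
  by (simp add: poly_at_shift_def ac_poly_mult pcompose_mult fps_of_poly_mult fls_times_fps_to_fls)

lemma poly_at_shift_add: "poly_at_shift (p + q) z = poly_at_shift p z + poly_at_shift q z"
  by (simp add: poly_at_shift_def ac_poly_add pcompose_add fps_of_poly_add)

lemma poly_at_shift_1 [simp]: "poly_at_shift 1 z = 1"
  by (simp add: poly_at_shift_def pcompose_1)

lemma poly_at_shift_eq_0_iff [simp]: "poly_at_shift p z = 0 \<longleftrightarrow> p = 0"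
  by (simp add: poly_at_shift_def pcompose_eq_0_iff ac_poly_eq_0_iff fps_of_poly_eq_iff[of _ 0, simplified])

lemma poly_at_shift_shiftp: "poly_at_shift (shiftp j p) z = poly_at_shift p (z + of_int j)"
  by (simp add: poly_at_shift_def shiftp_def ac_poly_pcompose pcompose_assoc[symmetric] pcompose_pCons
      map_poly_pCons algebra_simps)

lemma rat_at_shift_Fract:
  assumes "d \<noteq> 0" shows "rat_at_shift (Fract n d) z = poly_at_shift n z / poly_at_shift d z"
proof -
  obtain n' d' where fr: "frep (Fract n d) = (n', d')" "d' \<noteq> 0" "n * d' = n' * d"
    using assms by (rule frep_cases)
  hence "poly_at_shift n z * poly_at_shift d' z = poly_at_shift n' z * poly_at_shift d z"
    by (metis poly_at_shift_mult)
  thus ?thesis using fr assms by (simp add: rat_at_shift_def field_simps)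
qed

lemma rat_at_shift_polyf: "rat_at_shift (polyf p) z = poly_at_shift p z"
  by (simp add: polyf_def rat_at_shift_Fract)

lemma rat_at_shift_add: "rat_at_shift (x + y) z = rat_at_shift x z + rat_at_shift y z"
  by (cases x, cases y) (simp add: rat_at_shift_Fract poly_at_shift_add poly_at_shift_mult field_simps)

lemma rat_at_shift_mult: "rat_at_shift (x * y) z = rat_at_shift x z * rat_at_shift y z"
  by (cases x, cases y) (simp add: rat_at_shift_Fract poly_at_shift_mult)

lemma rat_at_shift_minus: "rat_at_shift (- x) z = - rat_at_shift x z"
  by (cases x) (simp add: rat_at_shift_Fract poly_at_shift_def ac_poly_minus pcompose_uminus fps_of_poly_simps)

lemma rat_at_shift_diff: "rat_at_shift (x - y) z = rat_at_shift x z - rat_at_shift y z"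
  by (simp only: diff_conv_add_uminus rat_at_shift_add rat_at_shift_minus)

lemma rat_at_shift_0 [simp]: "rat_at_shift 0 z = 0"
  using rat_at_shift_polyf[of 0 z] by (simp add: poly_at_shift_def)

lemma rat_at_shift_shiftf: "rat_at_shift (shiftf j x) z = rat_at_shift x (z + of_int j)"
  by (cases x) (simp add: rat_at_shift_Fract shiftf_Fract poly_at_shift_shiftp)

lemma rat_at_shift_divide_polyf:
  "p \<noteq> 0 \<Longrightarrow> rat_at_shift (x / polyf p) z = rat_at_shift x z / poly_at_shift p z"
  by (cases x) (simp add: rat_at_shift_Fract polyf_def poly_at_shift_mult)

lemma nu_q_mult: "nu_q (x * y) = nu_q x + nu_q (y :: 'a::field fls)"
  by (cases "x = 0"; cases "y = 0") (simp_all add: nu_q_def)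

lemma nu_q_minus: "nu_q (- x) = nu_q x"
  by (simp add: nu_q_def)

lemma nu_q_add: "min (nu_q x) (nu_q y) \<le> nu_q (x + y :: 'a::field fls)"
proof (cases "x = 0 \<or> y = 0 \<or> x + y = 0")
  case False
  hence "min (fls_subdegree x) (fls_subdegree y) \<le> fls_subdegree (x + y)"
    by (intro fls_plus_subdegree) auto
  thus ?thesis using False by (auto simp: nu_q_def min_def)
qed (auto simp: nu_q_def)

lemma nu_q_sum: "(\<And>i. i \<in> A \<Longrightarrow> c \<le> nu_q (f i)) \<Longrightarrow> c \<le> nu_q (sum f A :: 'a::field fls)"
proof (induction A rule: infinite_finite_induct)
  case (insert x F)
  hence "c \<le> min (nu_q (f x)) (nu_q (sum f F))" by simp
  also have "\<dots> \<le> nu_q (f x + sum f F)" by (rule nu_q_add)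
  finally show ?case using insert by simp
qed (simp_all add: nu_q_def)

lemma nu_q_poly_at_shift_nonneg: "0 \<le> nu_q (poly_at_shift p z)"
  by (simp add: nu_q_def poly_at_shift_def fls_subdegree_fls_to_fps_gt0)

lemma nu_q_poly_at_shift_eq_0:
  assumes "poly (ac_poly p) z \<noteq> 0" shows "nu_q (poly_at_shift p z) = 0"
proof -
  have "coeff (pcompose (ac_poly p) [:z, 1:]) 0 \<noteq> 0" using assms by (simp add: pcompose_coeff_0)
  hence "fls_subdegree (fps_to_fls (fps_of_poly (pcompose (ac_poly p) [:z, 1:]))) = 0"
    by (intro fls_subdegree_eqI) auto
  moreover have "poly_at_shift p z \<noteq> 0" using assms by auto
  ultimately show ?thesis by (simp add: nu_q_def poly_at_shift_def)
qed

lemma nu_q_rat_at_shift_nonneg: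
  assumes "f \<in> loc_ring z" shows "0 \<le> nu_q (rat_at_shift f z)"
proof -
  obtain n d where d: "poly (ac_poly d) z \<noteq> 0" "d \<noteq> 0" "f = Fract n d"
    using assms by (elim loc_ringE)
  hence "poly_at_shift n z = rat_at_shift f z * poly_at_shift d z" by (simp add: rat_at_shift_Fract)
  hence "nu_q (poly_at_shift n z) = nu_q (rat_at_shift f z)"
    using nu_q_poly_at_shift_eq_0[OF d(1)] by (simp add: nu_q_mult)
  thus ?thesis using nu_q_poly_at_shift_nonneg[of n z] by simp
qed

lemma comb_add: "comb r (\<lambda>i. c i + d i) W k = comb r c W k + comb r d W k"
  by (simp add: comb_def distrib_right sum.distrib)

lemma comb_diff: "comb r (\<lambda>i. c i - d i) W k = comb r c W k - comb r d W k"
  by (simp add: comb_def left_diff_distrib sum_subtractf)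

lemma comb_cong: "(\<And>i. i < r \<Longrightarrow> c i = d i) \<Longrightarrow> comb r c W k = comb r d W k"
  by (simp add: comb_def)

lemma sum_unit_vector_left:
  "j < (r::nat) \<Longrightarrow> (\<Sum>i<r. (if i = j then 1 else 0) * f i) = (f j :: 'a::semiring_1)"
  by (simp add: if_distrib[of "\<lambda>x. x * _"] cong: if_cong)

lemma sum_unit_vector_right:
  "j < (r::nat) \<Longrightarrow> (\<Sum>i<r. f i * (if i = j then 1 else 0)) = (f j :: 'a::semiring_1)"
  by (simp add: if_distrib[of "\<lambda>x. _ * x"] cong: if_cong)

lemma comb_unit_vector: "j < r \<Longrightarrow> comb r (\<lambda>i. if i = j then 1 else 0) W k = W j k"
  by (simp add: comb_def sum_unit_vector_left)

lemma fracA_eq_comb: "fracA r u a W = comb r (\<lambda>i. polyf (a i) / polyf u) W"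
  by (simp add: fracA_def comb_def sum_divide_distrib fun_eq_iff)

lemma Sact_add: "Sact l r (\<lambda>k. f k + g k) k = Sact l r f k + Sact l r g k"
  by (simp add: Sact_def shiftf_add algebra_simps add_divide_distrib)

lemma Sact_eqA: "0 < r \<Longrightarrow> eqA r f g \<Longrightarrow> eqA r (Sact l r f) (Sact l r g)"
  by (simp add: eqA_def Sact_def)

lemma Delta_add: "Delta l r (\<lambda>k. f k + g k) k = Delta l r f k + Delta l r g k"
  by (simp add: Delta_def Sact_add)

lemma Sact_minus: "Sact l r (\<lambda>k. - f k) k = - Sact l r f k"
  by (simp add: Sact_def shiftf_minus algebra_simps)

lemma Delta_minus: "Delta l r (\<lambda>k. - f k) k = - Delta l r f k"
  by (simp add: Delta_def Sact_minus)

lemma Delta_zero: "Delta l r (\<lambda>k. 0) k = 0"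
  by (simp add: Delta_def Sact_def)

lemma Sact_comb: "Sact l r (comb r c W) k = (\<Sum>i<r. shiftf 1 (c i) * Sact l r (W i) k)"
proof -
  define A where "A i = (if k = 0 then 0 else shiftf 1 (W i (k - 1)))" for i
  define B where "B i = shiftf 1 (W i (r - 1)) * polyf (l k) / polyf (l r)" for i
  have "Sact l r (comb r c W) k = (\<Sum>i<r. shiftf 1 (c i) * A i) - (\<Sum>i<r. shiftf 1 (c i) * B i)"
    by (simp add: Sact_def comb_def A_def B_def shiftf_sum shiftf_mult sum_distrib_right
        sum_divide_distrib mult.assoc)
  also have "\<dots> = (\<Sum>i<r. shiftf 1 (c i) * (A i - B i))"
    by (simp add: sum_subtractf right_diff_distrib)
  also have "\<dots> = (\<Sum>i<r. shiftf 1 (c i) * Sact l r (W i) k)"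
    by (simp add: A_def B_def Sact_def)
  finally show ?thesis .
qed

definition Sinv :: "(nat \<Rightarrow> 'c::field poly) \<Rightarrow> nat \<Rightarrow> 'c elt \<Rightarrow> 'c elt" where
  "Sinv l r f = (\<lambda>k. (if k + 1 < r then shiftf (-1) (f (k + 1)) else 0)
                     - shiftf (-1) (f 0 * polyf (l (k + 1)) / polyf (l 0)))"

lemma Sact_Sinv:
  fixes l :: "nat \<Rightarrow> 'c::field poly"
  assumes "l 0 \<noteq> 0" "l r \<noteq> 0" "k < r"
  shows "Sact l r (Sinv l r f) k = f k"
proof -
  have r: "r - 1 + 1 = r" using assms by simp
  have s1: "shiftf 1 (shiftf (-1) x) = x" for x :: "'c poly fract"
    by (simp add: shiftf_shiftf)
  have l0: "polyf (l 0) \<noteq> 0" "polyf (l r) \<noteq> 0" using assms by simp_all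
  have last: "shiftf 1 (Sinv l r f (r - 1)) = - (f 0 * polyf (l r) / polyf (l 0))"
    unfolding Sinv_def using r by (simp add: shiftf_diff shiftf_minus s1)
  show ?thesis
  proof (cases "k = 0")
    case True
    thus ?thesis unfolding Sact_def last using l0 by (simp add: field_simps)
  next
    case False
    hence k1: "k - 1 + 1 = k" by simp
    have "shiftf 1 (Sinv l r f (k - 1)) = f k - f 0 * polyf (l k) / polyf (l 0)"
      unfolding Sinv_def using k1 assms(3) by (simp add: shiftf_diff s1)
    thus ?thesis unfolding Sact_def last using l0 False by (simp add: field_simps)
  qed
qed

lemma Sinv_loc_ring:
  assumes "\<And>k. k < r \<Longrightarrow> f k \<in> loc_ring z" "poly (ac_poly (l 0)) z \<noteq> 0" "0 < r"
  shows "Sinv l r f k \<in> loc_ring (z + 1)"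
proof -
  have sh: "g \<in> loc_ring z \<Longrightarrow> shiftf (-1) g \<in> loc_ring (z + 1)" for g
    by (rule loc_ring_shiftf) simp
  have "(if k + 1 < r then shiftf (-1) (f (k + 1)) else 0) \<in> loc_ring (z + 1)"
    using assms(1)[of "k + 1"] by (simp add: sh loc_ring_0)
  moreover have "f 0 * polyf (l (k + 1)) / polyf (l 0) \<in> loc_ring z"
    using assms by (intro loc_ring_divide loc_ring_mult loc_ring_polyf) auto
  ultimately show ?thesis unfolding Sinv_def by (intro loc_ring_diff sh)
qed

lemma Sact_loc_ring:
  assumes "\<And>k. k < r \<Longrightarrow> f k \<in> loc_ring (z + 1)" "poly (ac_poly (l r)) z \<noteq> 0" "k < r"
  shows "Sact l r f k \<in> loc_ring z"
proof -
  have sh: "g \<in> loc_ring (z + 1) \<Longrightarrow> shiftf 1 g \<in> loc_ring z" for g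
    by (rule loc_ring_shiftf) simp
  have "(if k = 0 then 0 else shiftf 1 (f (k - 1))) \<in> loc_ring z"
    using assms(1)[of "k - 1"] assms(3) by (simp add: sh loc_ring_0)
  moreover have "shiftf 1 (f (r - 1)) * polyf (l k) / polyf (l r) \<in> loc_ring z"
    using assms by (intro loc_ring_divide loc_ring_mult loc_ring_polyf sh) auto
  ultimately show ?thesis unfolding Sact_def by (rule loc_ring_diff)
qed

lemma same_module_as_stdD:
  assumes "same_module_as_std r z W"
  shows "(\<exists>c. (\<forall>i<r. c i \<in> loc_ring z) \<and> eqA r f (comb r c W)) \<longleftrightarrow> (\<forall>k<r. f k \<in> loc_ring z)"
proof -
  have "(\<exists>c. (\<forall>i<r. c i \<in> loc_ring z) \<and> eqA r f (comb r c W))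
      \<longleftrightarrow> (\<exists>c. (\<forall>i<r. c i \<in> loc_ring z) \<and> (\<forall>k<r. f k = c k))"
    using assms unfolding same_module_as_std_def by (rule spec)
  also have "\<dots> \<longleftrightarrow> (\<forall>k<r. f k \<in> loc_ring z)"
    by (auto intro!: exI[of _ f])
  finally show ?thesis .
qed

lemma same_module_as_std_coords:
  assumes "same_module_as_std r z W" "j < r" "k < r"
  shows "W j k \<in> loc_ring z"
proof -
  have "\<exists>c. (\<forall>i<r. c i \<in> loc_ring z) \<and> eqA r (W j) (comb r c W)"
    using assms(2)
    by (intro exI[of _ "\<lambda>i. if i = j then 1 else 0"]) (simp add: eqA_def comb_unit_vector loc_ring_0 loc_ring_1)
  thus ?thesis using same_module_as_stdD[OF assms(1), of "W j"] assms(3) by simp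
qed

section \<open>Integrality under shifts\<close>

lemma integral_at_cong: "eqA r f g \<Longrightarrow> integral_at l r z f \<Longrightarrow> integral_at l r z g"
  unfolding integral_at_def valA_def act_at_def eqA_def by simp

text \<open>On solutions, \<open>S\<close> acts as the shift of the sequence: \<open>(S h \<cdot> b)(z) = (h \<cdot> b)(z + 1)\<close>,
  because the recurrence at \<open>z\<close> rewrites the coefficient \<open>b(z + r)\<close> in terms of lower ones.\<close>

lemma act_at_Sact:
  fixes l :: "nat \<Rightarrow> 'c::field poly"
  assumes Lr: "l r \<noteq> 0" and r: "0 < r" and b: "b \<in> SolA l r z"
  shows "act_at r (Sact l r h) z b = act_at r h (z + 1) (\<lambda>n. b (n + 1))"
proof -
  obtain r' where r': "r = Suc r'" using r by (cases r) auto
  define F where "F k = rat_at_shift (h k) (z + 1)" for k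
  have rs: "rat_at_shift (Sact l r h k) z =
        (if k = 0 then 0 else F (k - 1)) - F r' * poly_at_shift (l k) z / poly_at_shift (l r) z" for k
    unfolding Sact_def F_def r'
    by (simp add: rat_at_shift_diff rat_at_shift_shiftf rat_at_shift_divide_polyf rat_at_shift_mult
        rat_at_shift_polyf Lr[unfolded r'])
  have "(\<Sum>i\<le>r. poly_at_shift (l i) (z + of_int 0) * b (0 + int i)) = 0"
    using b unfolding SolA_def by blast
  hence sol: "(\<Sum>k<r. poly_at_shift (l k) z * b (int k)) = - (poly_at_shift (l r) z * b (int r))"
    by (simp add: lessThan_Suc_atMost[symmetric] r' eq_neg_iff_add_eq_0)
  have "act_at r (Sact l r h) z b =
      (\<Sum>k<r. (if k = 0 then 0 else F (k - 1)) * b (int k))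
      - (\<Sum>k<r. F r' / poly_at_shift (l r) z * (poly_at_shift (l k) z * b (int k)))"
    unfolding act_at_def rs sum_subtractf[symmetric] by (intro sum.cong refl) (simp add: left_diff_distrib)
  also have "(\<Sum>k<r. F r' / poly_at_shift (l r) z * (poly_at_shift (l k) z * b (int k))) = - F r' * b (int r)"
    unfolding sum_distrib_left[symmetric] sol using Lr by simp
  also have "(\<Sum>k<r. (if k = 0 then 0 else F (k - 1)) * b (int k)) = (\<Sum>k<r'. F k * b (int k + 1))"
    unfolding r' sum.lessThan_Suc_shift by (simp add: add.commute)
  finally have "act_at r (Sact l r h) z b = (\<Sum>k<r'. F k * b (int k + 1)) + F r' * b (int r' + 1)"
    by (simp add: r' add.commute)
  also have "\<dots> = act_at r h (z + 1) (\<lambda>n. b (n + 1))"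
    unfolding act_at_def F_def r' by simp
  finally show ?thesis .
qed

lemma SolA_shift:
  assumes "b \<in> SolA l r (z + 1)" shows "(\<lambda>n. b (n - 1)) \<in> SolA l r z"
  unfolding SolA_def
proof (intro CollectI allI)
  fix n :: int
  have "(\<Sum>i\<le>r. poly_at_shift (l i) (z + 1 + of_int (n - 1)) * b (n - 1 + int i)) = 0"
    using assms unfolding SolA_def by blast
  thus "(\<Sum>i\<le>r. poly_at_shift (l i) (z + of_int n) * b (n + int i - 1)) = 0"
    by (simp add: algebra_simps)
qed

lemma integral_at_Sact_imp:
  fixes l :: "nat \<Rightarrow> 'c::field poly"
  assumes Lr: "l r \<noteq> 0" and r: "0 < r" and int: "integral_at l r z (Sact l r h)"
  shows "integral_at l r (z + 1) h"
  unfolding integral_at_def valA_def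
proof (rule INF_greatest)
  fix b' assume b': "b' \<in> SolA l r (z + 1) - {\<lambda>_. 0}"
  define b where "b n = b' (n - 1)" for n
  have bS: "b \<in> SolA l r z" unfolding b_def using b' by (auto intro: SolA_shift)
  have bb: "(\<lambda>n. b (n + 1)) = b'" by (simp add: b_def)
  hence b0: "b \<noteq> (\<lambda>_. 0)" using b' by auto
  have "valA l r z (Sact l r h) \<le> nu_q (act_at r (Sact l r h) z b) - liminf (\<lambda>n::nat. nu_q (b (- int n)))"
    unfolding valA_def by (rule INF_lower) (use bS b0 in simp)
  hence "0 \<le> nu_q (act_at r (Sact l r h) z b) - liminf (\<lambda>n::nat. nu_q (b (- int n)))"
    using int unfolding integral_at_def by simp
  also have "act_at r (Sact l r h) z b = act_at r h (z + 1) b'"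
    using act_at_Sact[OF Lr r bS] bb by simp
  also have "(\<lambda>n::nat. nu_q (b (- int n))) = (\<lambda>n::nat. nu_q (b' (- int n))) \<circ> Suc"
    by (auto simp: b_def fun_eq_iff intro!: arg_cong[where f="\<lambda>x. nu_q (b' x)"])
  also have "nu_q (act_at r h (z + 1) b') - liminf ((\<lambda>n::nat. nu_q (b' (- int n))) \<circ> Suc)
      \<le> nu_q (act_at r h (z + 1) b') - liminf (\<lambda>n::nat. nu_q (b' (- int n)))"
    by (intro ereal_minus_mono order_refl liminf_subseq_mono) (simp add: strict_mono_Suc_iff)
  finally show "0 \<le> nu_q (act_at r h (z + 1) b') - liminf (\<lambda>n::nat. nu_q (b' (- int n)))" .
qed

lemma SolA_nu_q_le_top:
  fixes l :: "nat \<Rightarrow> 'c::field poly"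
  assumes b: "b \<in> SolA l r z" and lr: "poly (ac_poly (l r)) (z + of_int (t - int r)) \<noteq> 0"
    and lower: "\<And>i. i < r \<Longrightarrow> m \<le> nu_q (b (t - int r + int i))"
  shows "m \<le> nu_q (b t)"
proof -
  define t0 where "t0 = t - int r"
  have "(\<Sum>i\<le>r. poly_at_shift (l i) (z + of_int t0) * b (t0 + int i)) = 0"
    using b unfolding SolA_def by blast
  hence eq: "poly_at_shift (l r) (z + of_int t0) * b t
      = - (\<Sum>i<r. poly_at_shift (l i) (z + of_int t0) * b (t0 + int i))"
    by (simp add: lessThan_Suc_atMost[symmetric] t0_def eq_neg_iff_add_eq_0 add.commute)
  have "m \<le> nu_q (- (\<Sum>i<r. poly_at_shift (l i) (z + of_int t0) * b (t0 + int i)))"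
    unfolding nu_q_minus
  proof (rule nu_q_sum)
    fix i assume "i \<in> {..<r}"
    thus "m \<le> nu_q (poly_at_shift (l i) (z + of_int t0) * b (t0 + int i))"
      unfolding nu_q_mult using lower[of i] nu_q_poly_at_shift_nonneg[of "l i" "z + of_int t0"]
      by (simp add: add_increasing t0_def)
  qed
  also have "\<dots> = nu_q (b t)"
    unfolding eq[symmetric] nu_q_mult using nu_q_poly_at_shift_eq_0[OF lr] by (simp add: t0_def)
  finally show ?thesis .
qed

text \<open>Induction on \<open>t\<close> from far to the left: each \<open>b(z + t)\<close>, \<open>t < r\<close>, is controlled by the
  \<open>r\<close> coefficients before it, down to the tail \<open>b(z - n)\<close>, \<open>n \<ge> N\<close>.\<close>

lemma SolA_liminf_le:
  fixes l :: "nat \<Rightarrow> 'c::field poly"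
  assumes Lr: "\<forall>n::int. n < 0 \<longrightarrow> poly (ac_poly (l r)) (z + of_int n) \<noteq> 0"
    and b: "b \<in> SolA l r z" and t: "t < int r"
  shows "liminf (\<lambda>n::nat. nu_q (b (- int n))) \<le> nu_q (b t)"
  unfolding liminf_SUP_INF
proof (rule SUP_least)
  fix N :: nat
  define m where "m = (INF n\<in>{N..}. nu_q (b (- int n)))"
  have "t < int r \<longrightarrow> m \<le> nu_q (b t)"
  proof (induction t rule: measure_induct_rule[where f="\<lambda>t. nat (t + int N)"])
    case (less t)
    show ?case
    proof (cases "t \<le> - int N")
      case True
      hence "m \<le> nu_q (b (- int (nat (- t))))" unfolding m_def by (intro INF_lower) auto
      thus ?thesis using True by simp
    next
      case False
      show ?thesis
      proof
        assume tr: "t < int r"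
        show "m \<le> nu_q (b t)"
        proof (rule SolA_nu_q_le_top[OF b])
          show "poly (ac_poly (l r)) (z + of_int (t - int r)) \<noteq> 0" using Lr[rule_format, of "t - int r"] tr by simp
          fix i assume "i < r"
          hence "nat (t - int r + int i + int N) < nat (t + int N)" "t - int r + int i < int r"
            using False tr by auto
          thus "m \<le> nu_q (b (t - int r + int i))" using less by blast
        qed
      qed
    qed
  qed
  thus "m \<le> nu_q (b t)" using t by simp
qed

lemma integral_at_if_loc_ring:
  fixes l :: "nat \<Rightarrow> 'c::field poly"
  assumes Lr: "\<forall>n::int. n < 0 \<longrightarrow> poly (ac_poly (l r)) (z + of_int n) \<noteq> 0"
    and f: "\<forall>k<r. f k \<in> loc_ring z"
  shows "integral_at l r z f"
  unfolding integral_at_def valA_def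
proof (rule INF_greatest)
  fix b assume b: "b \<in> SolA l r z - {\<lambda>_. 0}"
  have "liminf (\<lambda>n::nat. nu_q (b (- int n))) \<le> nu_q (act_at r f z b)"
    unfolding act_at_def
  proof (rule nu_q_sum)
    fix k assume "k \<in> {..<r}"
    hence "0 \<le> nu_q (rat_at_shift (f k) z)" "liminf (\<lambda>n::nat. nu_q (b (- int n))) \<le> nu_q (b (int k))"
      using f b SolA_liminf_le[of l r z b "int k"] Lr by (auto intro: nu_q_rat_at_shift_nonneg)
    thus "liminf (\<lambda>n::nat. nu_q (b (- int n))) \<le> nu_q (rat_at_shift (f k) z * b (int k))"
      unfolding nu_q_mult by (simp add: add_increasing)
  qed
  thus "0 \<le> nu_q (act_at r f z b) - liminf (\<lambda>n::nat. nu_q (b (- int n)))"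
    by (rule ereal_diff_positive)
qed

lemma same_orbit_iff: "same_orbit z b \<longleftrightarrow> (\<exists>k::int. z = b + of_int k)"
  unfolding same_orbit_def by (auto simp: algebra_simps)

lemma same_orbit_add_of_int: "same_orbit ((z::'a::ring_1) + of_int k) w \<longleftrightarrow> same_orbit z w"
  unfolding same_orbit_def
proof
  assume "\<exists>n. z + of_int k - w = of_int n"
  then obtain n where "z + of_int k - w = of_int n" by blast
  hence "z - w = of_int (n - k)" by (simp add: algebra_simps)
  thus "\<exists>n. z - w = of_int n" by blast
next
  assume "\<exists>n. z - w = of_int n"
  then obtain n where "z - w = of_int n" by blast
  hence "z + of_int k - w = of_int (n + k)" by (simp add: algebra_simps)
  thus "\<exists>n. z + of_int k - w = of_int n" by blast
qed

lemma same_orbit_right_cong: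
  assumes "same_orbit (w::'a::ring_1) w'" shows "same_orbit z w \<longleftrightarrow> same_orbit z w'"
proof -
  obtain k where "w = w' + of_int k" using assms same_orbit_iff by blast
  hence "same_orbit z w \<longleftrightarrow> same_orbit (z + of_int (- k)) w'"
    unfolding same_orbit_def by (simp add: algebra_simps)
  thus ?thesis by (simp only: same_orbit_add_of_int)
qed

lemma orb_lt_add_of_int: "orb_lt ((b::'a::ring_char_0) + of_int m) (b + of_int n) \<longleftrightarrow> m < n"
proof
  assume "orb_lt (b + of_int m) (b + of_int n)"
  then obtain k :: nat where "k > 0" "(of_int (m - n) :: 'a) = of_int (- int k)"
    unfolding orb_lt_def by auto
  thus "m < n" by (simp only: of_int_eq_iff)
next
  assume "m < n"
  thus "orb_lt (b + of_int m) (b + of_int n)"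
    unfolding orb_lt_def by (intro exI[of _ "nat (n - m)"]) (simp add: of_nat_nat)
qed

lemma orb_le_add_of_int: "orb_le ((b::'a::ring_char_0) + of_int m) (b + of_int n) \<longleftrightarrow> m \<le> n"
  unfolding orb_le_def orb_lt_add_of_int by auto

lemma orbit_max_eqI:
  fixes R :: "'a::ring_char_0 set"
  assumes "\<rho> \<in> R" "same_orbit \<rho> b" "\<And>\<rho>'. \<rho>' \<in> R \<Longrightarrow> same_orbit \<rho>' b \<Longrightarrow> orb_le \<rho>' \<rho>"
  shows "orbit_max R b = \<rho>"
  unfolding orbit_max_def
proof (rule the_equality)
  fix \<rho>' assume h: "\<rho>' \<in> R \<and> same_orbit \<rho>' b \<and> (\<forall>\<rho>''\<in>R. same_orbit \<rho>'' b \<longrightarrow> orb_le \<rho>'' \<rho>')"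
  obtain k where k: "\<rho>' = b + of_int k" using h same_orbit_iff by blast
  obtain m where m: "\<rho> = b + of_int m" using assms(2) same_orbit_iff by blast
  have "orb_le \<rho>' \<rho>" "orb_le \<rho> \<rho>'" using assms h by auto
  thus "\<rho>' = \<rho>" unfolding k m orb_le_add_of_int by simp
qed (use assms in blast)

lemma orbit_min_eqI:
  fixes R :: "'a::ring_char_0 set"
  assumes "\<rho> \<in> R" "same_orbit \<rho> b" "\<And>\<rho>'. \<rho>' \<in> R \<Longrightarrow> same_orbit \<rho>' b \<Longrightarrow> orb_le \<rho> \<rho>'"
  shows "orbit_min R b = \<rho>"
  unfolding orbit_min_def
proof (rule the_equality)
  fix \<rho>' assume h: "\<rho>' \<in> R \<and> same_orbit \<rho>' b \<and> (\<forall>\<rho>''\<in>R. same_orbit \<rho>'' b \<longrightarrow> orb_le \<rho>' \<rho>'')"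
  obtain k where k: "\<rho>' = b + of_int k" using h same_orbit_iff by blast
  obtain m where m: "\<rho> = b + of_int m" using assms(2) same_orbit_iff by blast
  have "orb_le \<rho>' \<rho>" "orb_le \<rho> \<rho>'" using assms h by auto
  thus "\<rho>' = \<rho>" unfolding k m orb_le_add_of_int by simp
qed (use assms in blast)

lemma orbit_extrema:
  fixes R :: "'a::ring_char_0 set"
  assumes "finite R" "\<exists>\<rho>\<in>R. same_orbit \<rho> b"
  obtains v u where "orbit_min R b = b + of_int v" "orbit_max R b = b + of_int u"
    "b + of_int v \<in> R" "b + of_int u \<in> R" "\<And>n. b + of_int n \<in> R \<Longrightarrow> v \<le> n \<and> n \<le> u"
proof -
  define K where "K = {n::int. b + of_int n \<in> R}"
  have "finite K"
    unfolding K_def using assms(1) by (rule finite_vimageI[unfolded vimage_def]) (auto simp: inj_def)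
  moreover have "K \<noteq> {}" using assms(2) by (auto simp: K_def same_orbit_iff)
  ultimately have K: "Min K \<in> K" "Max K \<in> K" "\<And>n. n \<in> K \<Longrightarrow> Min K \<le> n \<and> n \<le> Max K" by auto
  have K': "b + of_int (Min K) \<in> R" "b + of_int (Max K) \<in> R"
    "\<And>n. b + of_int n \<in> R \<Longrightarrow> Min K \<le> n \<and> n \<le> Max K"
    using K by (auto simp: K_def)
  have "orbit_min R b = b + of_int (Min K)"
  proof (rule orbit_min_eqI)
    fix \<rho> assume "\<rho> \<in> R" "same_orbit \<rho> b"
    thus "orb_le (b + of_int (Min K)) \<rho>" using K'(3) by (auto simp: same_orbit_iff orb_le_add_of_int)
  qed (use K' in \<open>auto simp: same_orbit_iff\<close>)
  moreover have "orbit_max R b = b + of_int (Max K)"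
  proof (rule orbit_max_eqI)
    fix \<rho> assume "\<rho> \<in> R" "same_orbit \<rho> b"
    thus "orb_le \<rho> (b + of_int (Max K))" using K'(3) by (auto simp: same_orbit_iff orb_le_add_of_int)
  qed (use K' in \<open>auto simp: same_orbit_iff\<close>)
  ultimately show thesis using that K' by blast
qed

section \<open>Reduction of denominators by shifting\<close>

definition matrix_regular_at :: "nat \<Rightarrow> (nat \<Rightarrow> nat \<Rightarrow> 'c::field poly fract) \<Rightarrow> 'c alg_closure \<Rightarrow> bool" where
  "matrix_regular_at r F z \<longleftrightarrow> (\<forall>i<r. \<forall>j<r. F i j \<in> loc_ring z)"

locale shift_matrix =
  fixes l :: "nat \<Rightarrow> 'c::{field_char_0,field_gcd} poly" and r :: nat and W :: "nat \<Rightarrow> 'c elt"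
    and e et :: "'c poly" and M Mt :: "nat \<Rightarrow> nat \<Rightarrow> 'c poly"
  assumes L0: "l 0 \<noteq> 0" and Lr: "l r \<noteq> 0" and r_pos: "0 < r"
    and basis: "is_basisA r W"
    and SW: "\<forall>i<r. eqA r (Sact l r (W i)) (comb r (\<lambda>j. polyf (M i j) / polyf e) W)"
    and inv1: "\<forall>i<r. \<forall>j<r. (\<Sum>k<r. (polyf (M i k) / polyf e) * (polyf (Mt k j) / polyf et))
                  = (if i = j then 1 else 0)"
    and inv2: "\<forall>i<r. \<forall>j<r. (\<Sum>k<r. (polyf (Mt i k) / polyf et) * (polyf (M k j) / polyf e))
                  = (if i = j then 1 else 0)"
begin

definition Mrat :: "nat \<Rightarrow> nat \<Rightarrow> 'c poly fract" where "Mrat i j = polyf (M i j) / polyf e"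
definition Minv :: "nat \<Rightarrow> nat \<Rightarrow> 'c poly fract" where "Minv i j = polyf (Mt i j) / polyf et"

lemma e_nonzero: "e \<noteq> 0" and et_nonzero: "et \<noteq> 0"
proof -
  have "(\<Sum>k<r. (polyf (M 0 k) / polyf e) * (polyf (Mt k 0) / polyf et)) = 1"
    using inv1 r_pos by simp
  thus "e \<noteq> 0" "et \<noteq> 0" by auto
qed

lemma Minv_Mrat_cancel:
  assumes "j < r" shows "(\<Sum>i<r. (\<Sum>k<r. x k * Minv k i) * Mrat i j) = x j"
proof -
  have "(\<Sum>i<r. (\<Sum>k<r. x k * Minv k i) * Mrat i j) = (\<Sum>i<r. \<Sum>k<r. x k * (Minv k i * Mrat i j))"
    by (simp add: sum_distrib_right mult.assoc)
  also have "\<dots> = (\<Sum>k<r. \<Sum>i<r. x k * (Minv k i * Mrat i j))"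
    by (rule sum.swap)
  also have "\<dots> = (\<Sum>k<r. x k * (\<Sum>i<r. Minv k i * Mrat i j))"
    by (simp add: sum_distrib_left)
  also have "\<dots> = (\<Sum>k<r. x k * (if k = j then 1 else 0))"
    using inv2 assms by (intro sum.cong) (simp_all add: Minv_def Mrat_def)
  finally show ?thesis using assms by (simp add: sum_unit_vector_right)
qed

lemma Mrat_Minv_cancel:
  assumes "j < r" shows "(\<Sum>i<r. (\<Sum>k<r. x k * Mrat k i) * Minv i j) = x j"
proof -
  have "(\<Sum>i<r. (\<Sum>k<r. x k * Mrat k i) * Minv i j) = (\<Sum>i<r. \<Sum>k<r. x k * (Mrat k i * Minv i j))"
    by (simp add: sum_distrib_right mult.assoc)
  also have "\<dots> = (\<Sum>k<r. \<Sum>i<r. x k * (Mrat k i * Minv i j))"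
    by (rule sum.swap)
  also have "\<dots> = (\<Sum>k<r. x k * (\<Sum>i<r. Mrat k i * Minv i j))"
    by (simp add: sum_distrib_left)
  also have "\<dots> = (\<Sum>k<r. x k * (if k = j then 1 else 0))"
    using inv1 assms by (intro sum.cong) (simp_all add: Minv_def Mrat_def)
  finally show ?thesis using assms by (simp add: sum_unit_vector_right)
qed

lemma comb_unique:
  assumes "eqA r (comb r c W) (comb r d W)" "i < r" shows "c i = d i"
proof -
  have "eqA r (comb r (\<lambda>i. c i - d i) W) (\<lambda>_. 0)"
    using assms(1) by (simp add: eqA_def comb_diff)
  hence "c i - d i = 0" using basis assms(2) unfolding is_basisA_def by blast
  thus ?thesis by simp
qed

lemma Sact_W: "i < r \<Longrightarrow> k < r \<Longrightarrow> Sact l r (W i) k = comb r (Mrat i) W k"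
  using SW by (simp add: eqA_def Mrat_def[abs_def])

lemma Sact_comb_W:
  assumes "k < r"
  shows "Sact l r (comb r c W) k = comb r (\<lambda>j. \<Sum>i<r. shiftf 1 (c i) * Mrat i j) W k"
proof -
  have "Sact l r (comb r c W) k = (\<Sum>i<r. shiftf 1 (c i) * comb r (Mrat i) W k)"
    using assms by (simp add: Sact_comb Sact_W)
  also have "\<dots> = (\<Sum>i<r. \<Sum>j<r. shiftf 1 (c i) * Mrat i j * W j k)"
    by (simp add: comb_def sum_distrib_left mult.assoc)
  also have "\<dots> = (\<Sum>j<r. \<Sum>i<r. shiftf 1 (c i) * Mrat i j * W j k)"
    by (rule sum.swap)
  also have "\<dots> = comb r (\<lambda>j. \<Sum>i<r. shiftf 1 (c i) * Mrat i j) W k"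
    by (simp add: comb_def sum_distrib_right)
  finally show ?thesis .
qed

definition reduces_to :: "'c poly \<Rightarrow> (nat \<Rightarrow> 'c poly fract) \<Rightarrow> bool" where
  "reduces_to D U \<longleftrightarrow>
     (\<exists>g c. eqA r (comb r U W) (addA (Delta l r g) (comb r (\<lambda>i. polyf (c i) / polyf D) W)))"

definition reducible_denominator :: "'c poly \<Rightarrow> 'c poly \<Rightarrow> bool" where
  "reducible_denominator D Q \<longleftrightarrow> (\<forall>a. reduces_to D (\<lambda>i. polyf (a i) / polyf Q))"

lemma reduces_to_add:
  assumes "reduces_to D U" "reduces_to D V" shows "reduces_to D (\<lambda>i. U i + V i)"
proof -
  obtain g c where 1: "eqA r (comb r U W) (addA (Delta l r g) (comb r (\<lambda>i. polyf (c i) / polyf D) W))"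
    using assms(1) by (auto simp: reduces_to_def)
  obtain g' c' where 2: "eqA r (comb r V W) (addA (Delta l r g') (comb r (\<lambda>i. polyf (c' i) / polyf D) W))"
    using assms(2) by (auto simp: reduces_to_def)
  have "comb r (\<lambda>i. polyf (c i + c' i) / polyf D) W k
      = comb r (\<lambda>i. polyf (c i) / polyf D) W k + comb r (\<lambda>i. polyf (c' i) / polyf D) W k" for k
    by (simp only: polyf_add add_divide_distrib comb_add)
  hence "eqA r (comb r (\<lambda>i. U i + V i) W)
     (addA (Delta l r (\<lambda>k. g k + g' k)) (comb r (\<lambda>i. polyf (c i + c' i) / polyf D) W))"
    using 1 2 by (simp add: eqA_def addA_def comb_add Delta_add)
  thus ?thesis by (auto simp: reduces_to_def)
qed

lemma reduces_to_of_dvd: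
  assumes "D' dvd D" "D \<noteq> 0" shows "reduces_to D (\<lambda>i. polyf (a i) / polyf D')"
proof -
  obtain t where t: "D = D' * t" using assms(1) by blast
  hence "t \<noteq> 0" "D' \<noteq> 0" using assms(2) by auto
  hence "eqA r (comb r (\<lambda>i. polyf (a i) / polyf D') W)
          (addA (Delta l r (\<lambda>k. 0)) (comb r (\<lambda>i. polyf (a i * t) / polyf D) W))"
    using t by (simp add: eqA_def addA_def Delta_zero polyf_mult)
  thus ?thesis by (auto simp: reduces_to_def)
qed

lemma reduces_to_Delta:
  assumes "\<And>k. k < r \<Longrightarrow> comb r U W k = Delta l r g k + comb r V W k" "reduces_to D V"
  shows "reduces_to D U"
proof -
  obtain g' c where "eqA r (comb r V W) (addA (Delta l r g') (comb r (\<lambda>i. polyf (c i) / polyf D) W))"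
    using assms(2) by (auto simp: reduces_to_def)
  hence "eqA r (comb r U W) (addA (Delta l r (\<lambda>k. g k + g' k)) (comb r (\<lambda>i. polyf (c i) / polyf D) W))"
    using assms(1) by (simp add: eqA_def addA_def Delta_add)
  thus ?thesis by (auto simp: reduces_to_def)
qed

lemma reduces_to_cong:
  assumes "\<And>i. i < r \<Longrightarrow> U i = V i" "reduces_to D V" shows "reduces_to D U"
proof -
  have "comb r U W = comb r V W" using assms(1) by (intro ext comb_cong) auto
  thus ?thesis using assms(2) by (simp add: reduces_to_def)
qed

text \<open>The two ways of moving a denominator, both from \<open>\<Delta>(V W) = \<sigma>(V) (M/e) W - V W\<close>.\<close>

lemma reduces_to_shift_down:
  assumes "\<And>j. j < r \<Longrightarrow> U j = (\<Sum>i<r. shiftf 1 (V i) * Mrat i j) + Z j"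
    and "reduces_to D (\<lambda>i. Z i + V i)"
  shows "reduces_to D U"
proof (rule reduces_to_Delta[OF _ assms(2)])
  fix k assume k: "k < r"
  have "Delta l r (comb r V W) k + comb r (\<lambda>i. Z i + V i) W k
      = comb r (\<lambda>j. (\<Sum>i<r. shiftf 1 (V i) * Mrat i j) + Z j) W k"
    using k by (simp add: Delta_def Sact_comb_W comb_add)
  also have "\<dots> = comb r U W k" by (rule comb_cong) (simp add: assms(1))
  finally show "comb r U W k = Delta l r (comb r V W) k + comb r (\<lambda>i. Z i + V i) W k" by simp
qed

lemma reduces_to_shift_up:
  assumes "reduces_to D (\<lambda>j. (\<Sum>i<r. polyf (shiftp 1 (a i)) * Mrat i j) / polyf (shiftp 1 Q))"
  shows "reduces_to D (\<lambda>i. polyf (a i) / polyf Q)"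
proof (rule reduces_to_Delta[OF _ assms])
  fix k assume k: "k < r"
  define U where "U = (\<lambda>i. polyf (a i) / polyf Q)"
  have "Delta l r (\<lambda>k. - comb r U W k) k = - Sact l r (comb r U W) k + comb r U W k"
    using Delta_minus[of l r "comb r U W" k] by (simp add: Delta_def)
  also have "Sact l r (comb r U W) k
      = comb r (\<lambda>j. (\<Sum>i<r. polyf (shiftp 1 (a i)) * Mrat i j) / polyf (shiftp 1 Q)) W k"
    using k by (simp add: Sact_comb_W U_def shiftf_divide shiftf_polyf sum_divide_distrib mult_ac)
  finally show "comb r (\<lambda>i. polyf (a i) / polyf Q) W k = Delta l r (\<lambda>k. - comb r U W k) k
      + comb r (\<lambda>j. (\<Sum>i<r. polyf (shiftp 1 (a i)) * Mrat i j) / polyf (shiftp 1 Q)) W k"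
    by (simp add: U_def)
qed

lemma reducible_denominator_of_dvd: "Q dvd D \<Longrightarrow> D \<noteq> 0 \<Longrightarrow> reducible_denominator D Q"
  unfolding reducible_denominator_def using reduces_to_of_dvd by blast

text \<open>Moving \<open>Q\<close> down to \<open>\<sigma>\<^sup>-\<^sup>1(Q)\<close>: \<open>D'\<close> clears the denominators of \<open>N = (M/e)\<^sup>-\<^sup>1\<close> and is
  coprime to \<open>Q\<close>; after splitting \<open>1/Q = u D'/Q + v\<close>, the part \<open>u D' a / Q\<close> equals
  \<open>\<sigma>(V) M/e\<close> for \<open>V = \<sigma>\<^sup>-\<^sup>1(u D' a N / Q)\<close>, which has polynomial numerator.\<close>

lemma reducible_denominator_step_down:
  assumes Q0: "Q \<noteq> 0" and D0: "D \<noteq> 0" and IH: "reducible_denominator D (shiftp (-1) Q)"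
    and cop: "coprime D' Q" and n: "\<And>i j. i < r \<Longrightarrow> j < r \<Longrightarrow> polyf D' * Minv i j = polyf (n i j)"
  shows "reducible_denominator D Q"
  unfolding reducible_denominator_def
proof
  fix a :: "nat \<Rightarrow> 'c poly"
  obtain u v where uv: "u * D' + v * Q = 1" using cop by (rule coprime_bezout)
  define x where "x k = polyf u * polyf D' / polyf Q * polyf (a k)" for k
  define B where "B i = u * (\<Sum>k<r. a k * n k i)" for i
  define V where "V i = polyf (shiftp (-1) (B i)) / polyf (shiftp (-1) Q)" for i
  have "shiftf 1 (V i) = (\<Sum>k<r. x k * Minv k i)" if "i < r" for i
  proof -
    have "shiftf 1 (V i) = polyf u / polyf Q * (\<Sum>k<r. polyf (a k) * polyf (n k i))"
      by (simp add: V_def B_def shiftf_divide shiftf_polyf shiftp_shiftp polyf_mult polyf_sum)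
    also have "\<dots> = (\<Sum>k<r. x k * Minv k i)"
      unfolding sum_distrib_left x_def using n that by (intro sum.cong) (auto simp: mult_ac)
    finally show ?thesis .
  qed
  hence V: "(\<Sum>i<r. shiftf 1 (V i) * Mrat i j) = x j" if "j < r" for j
    using Minv_Mrat_cancel[OF that, of x] by simp
  have "polyf (a j) / polyf Q = x j + polyf (a j * v) / polyf 1" for j
  proof -
    have "polyf u * polyf D' + polyf v * polyf Q = 1"
      using arg_cong[OF uv, of polyf] by (simp add: polyf_add polyf_mult)
    hence "polyf (a j) / polyf Q = polyf (a j) * (polyf u * polyf D' + polyf v * polyf Q) / polyf Q"
      by simp
    thus ?thesis using Q0 unfolding x_def by (simp add: polyf_mult field_simps)
  qed
  hence "polyf (a j) / polyf Q = (\<Sum>i<r. shiftf 1 (V i) * Mrat i j) + polyf (a j * v) / polyf 1"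
    if "j < r" for j
    using V[OF that] by simp
  moreover have "reduces_to D (\<lambda>i. polyf (a i * v) / polyf 1 + V i)"
  proof (rule reduces_to_add)
    show "reduces_to D (\<lambda>i. polyf (a i * v) / polyf 1)" using D0 by (intro reduces_to_of_dvd) auto
    show "reduces_to D V"
      using IH[unfolded reducible_denominator_def, rule_format, of "\<lambda>i. shiftp (-1) (B i)"]
      unfolding V_def by simp
  qed
  ultimately show "reduces_to D (\<lambda>i. polyf (a i) / polyf Q)"
    by (rule reduces_to_shift_down)
qed

text \<open>Moving \<open>Q\<close> up to \<open>\<sigma>(Q)\<close>: \<open>a W / Q\<close> is congruent to \<open>\<sigma>(a) (M/e) W / \<sigma>(Q)\<close>, and a
  Bezout identity for \<open>\<sigma>(Q)\<close> and a denominator \<open>D'\<close> of \<open>M/e\<close> coprime to it splits this into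
  a term with denominator \<open>\<sigma>(Q)\<close> and one with denominator \<open>e\<close>.\<close>

lemma reducible_denominator_step_up:
  assumes Q0: "Q \<noteq> 0" and D0: "D \<noteq> 0" and IH: "reducible_denominator D (shiftp 1 Q)"
    and cop: "coprime D' (shiftp 1 Q)"
    and m: "\<And>i j. i < r \<Longrightarrow> j < r \<Longrightarrow> polyf D' * Mrat i j = polyf (m i j)"
    and eD: "e dvd D"
  shows "reducible_denominator D Q"
  unfolding reducible_denominator_def
proof
  fix a :: "nat \<Rightarrow> 'c poly"
  define S where "S j = (\<Sum>i<r. polyf (shiftp 1 (a i)) * Mrat i j)" for j
  obtain u v where uv: "u * D' + v * shiftp 1 Q = 1" using cop by (rule coprime_bezout)
  define c where "c j = u * (\<Sum>i<r. shiftp 1 (a i) * m i j)" for j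
  define w where "w j = v * (\<Sum>i<r. shiftp 1 (a i) * M i j)" for j
  have "S j / polyf (shiftp 1 Q) = polyf (c j) / polyf (shiftp 1 Q) + polyf (w j) / polyf e"
    if j: "j < r" for j
  proof -
    have "polyf (c j) = polyf u * polyf D' * S j"
      unfolding c_def S_def polyf_mult polyf_sum sum_distrib_left
      using m j by (intro sum.cong) (auto simp: mult_ac)
    moreover have "polyf (w j) / polyf e = polyf v * S j"
      by (simp add: w_def S_def polyf_mult polyf_sum Mrat_def sum_distrib_left sum_divide_distrib mult_ac)
    moreover have "polyf u * polyf D' + polyf v * polyf (shiftp 1 Q) = 1"
      using arg_cong[OF uv, of polyf] by (simp add: polyf_add polyf_mult)
    hence "S j / polyf (shiftp 1 Q)
        = S j * (polyf u * polyf D' + polyf v * polyf (shiftp 1 Q)) / polyf (shiftp 1 Q)"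
      by simp
    ultimately show ?thesis using Q0 by (simp add: field_simps)
  qed
  moreover have "reduces_to D (\<lambda>j. polyf (c j) / polyf (shiftp 1 Q) + polyf (w j) / polyf e)"
    using IH reduces_to_of_dvd[OF eD D0] unfolding reducible_denominator_def by (intro reduces_to_add) auto
  ultimately have "reduces_to D (\<lambda>j. S j / polyf (shiftp 1 Q))"
    by (rule reduces_to_cong)
  thus "reduces_to D (\<lambda>i. polyf (a i) / polyf Q)"
    unfolding S_def by (rule reduces_to_shift_up)
qed

lemma reducible_denominator_last_step_up:
  assumes "Q \<noteq> 0" "D \<noteq> 0" "e * shiftp 1 Q dvd D"
  shows "reducible_denominator D Q"
  unfolding reducible_denominator_def
proof
  fix a :: "nat \<Rightarrow> 'c poly"
  have "(\<Sum>i<r. polyf (shiftp 1 (a i)) * Mrat i j) / polyf (shiftp 1 Q)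
      = polyf (\<Sum>i<r. shiftp 1 (a i) * M i j) / polyf (e * shiftp 1 Q)" for j
    by (simp add: polyf_mult polyf_sum Mrat_def sum_divide_distrib mult_ac)
  moreover have "reduces_to D (\<lambda>j. polyf (\<Sum>i<r. shiftp 1 (a i) * M i j) / polyf (e * shiftp 1 Q))"
    using assms by (intro reduces_to_of_dvd)
  ultimately show "reduces_to D (\<lambda>i. polyf (a i) / polyf Q)"
    by (intro reduces_to_shift_up) simp
qed

lemma reducible_denominator_shiftp_nonneg:
  assumes q0: "q \<noteq> 0"
    and reg: "\<And>j z. 1 \<le> j \<Longrightarrow> j \<le> k \<Longrightarrow> poly (ac_poly (shiftp (int j) q)) z = 0 \<Longrightarrow>
                  matrix_regular_at r Minv z"
  shows "reducible_denominator (q * e * et) (shiftp (int k) q)"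
  using reg
proof (induction k)
  case 0
  show ?case using q0 e_nonzero et_nonzero by (intro reducible_denominator_of_dvd) auto
next
  case (Suc k)
  define Q where "Q = shiftp (int (Suc k)) q"
  have IH: "reducible_denominator (q * e * et) (shiftp (-1) Q)"
    using Suc unfolding Q_def by (simp add: shiftp_shiftp)
  have "\<And>ij z. ij \<in> {..<r} \<times> {..<r} \<Longrightarrow> poly (ac_poly Q) z = 0 \<Longrightarrow> case_prod Minv ij \<in> loc_ring z"
    using Suc.prems[of "Suc k"] unfolding Q_def matrix_regular_at_def by auto
  then obtain D' n where "coprime D' Q" "\<And>i j. i < r \<Longrightarrow> j < r \<Longrightarrow> polyf D' * Minv i j = polyf (n (i, j))"
    using q0 by (auto intro: common_denominator_coprime[of "{..<r} \<times> {..<r}" Q "case_prod Minv"] simp: Q_def)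
  hence "reducible_denominator (q * e * et) Q"
    using q0 e_nonzero et_nonzero by (intro reducible_denominator_step_down[OF _ _ IH]) (auto simp: Q_def)
  thus ?case by (simp add: Q_def)
qed

lemma reducible_denominator_shiftp_neg:
  assumes q0: "q \<noteq> 0" and k: "1 \<le> k"
    and reg: "\<And>j z. 1 \<le> j \<Longrightarrow> j < k \<Longrightarrow> poly (ac_poly (shiftp (- int j) q)) z = 0 \<Longrightarrow>
                  matrix_regular_at r Mrat z"
  shows "reducible_denominator (q * e * et) (shiftp (- int k) q)"
  using k reg
proof (induction k rule: dec_induct)
  case base
  have "shiftp 1 (shiftp (- int 1) q) = q" by (simp add: shiftp_shiftp)
  thus ?case using q0 e_nonzero et_nonzero
    by (intro reducible_denominator_last_step_up) (auto simp: mult_ac)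
next
  case (step k)
  define Q where "Q = shiftp (- int (Suc k)) q"
  have sQ: "shiftp 1 Q = shiftp (- int k) q" unfolding Q_def by (simp add: shiftp_shiftp)
  have IH: "reducible_denominator (q * e * et) (shiftp 1 Q)"
    unfolding sQ using step by simp
  have "\<And>ij z. ij \<in> {..<r} \<times> {..<r} \<Longrightarrow> poly (ac_poly (shiftp 1 Q)) z = 0 \<Longrightarrow> case_prod Mrat ij \<in> loc_ring z"
    using step.prems[of k] step.hyps unfolding sQ matrix_regular_at_def by auto
  then obtain D' m where "coprime D' (shiftp 1 Q)"
    "\<And>i j. i < r \<Longrightarrow> j < r \<Longrightarrow> polyf D' * Mrat i j = polyf (m (i, j))"
    using q0 by (auto intro: common_denominator_coprime[of "{..<r} \<times> {..<r}" "shiftp 1 Q" "case_prod Mrat"]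
        simp: Q_def)
  hence "reducible_denominator (q * e * et) Q"
    using q0 e_nonzero et_nonzero
    by (intro reducible_denominator_step_up[OF _ _ IH]) (auto simp: Q_def)
  thus ?case by (simp add: Q_def)
qed

lemma reduction_of_shifted_denominator:
  assumes q0: "q \<noteq> 0"
    and down: "\<And>j z. 1 \<le> j \<Longrightarrow> poly (ac_poly (shiftp (int j) q)) z = 0 \<Longrightarrow> matrix_regular_at r Minv z"
    and up: "\<And>j z. 1 \<le> j \<Longrightarrow> poly (ac_poly (shiftp (- int j) q)) z = 0 \<Longrightarrow> matrix_regular_at r Mrat z"
  shows "\<exists>g c. eqA r (fracA r (shiftp ell q) a W) (addA (Delta l r g) (fracA r (q * e * et) c W))"
proof -
  have "reducible_denominator (q * e * et) (shiftp ell q)"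
  proof (cases "ell \<ge> 0")
    case True
    thus ?thesis using reducible_denominator_shiftp_nonneg[OF q0, of "nat ell"] down by simp
  next
    case False
    thus ?thesis using reducible_denominator_shiftp_neg[OF q0, of "nat (- ell)"] up by simp
  qed
  thus ?thesis unfolding reducible_denominator_def reduces_to_def fracA_eq_comb by blast
qed

end

section \<open>Regularity of the shift matrices\<close>

context shift_matrix
begin

lemma Mrat_regular_std:
  assumes "same_module_as_std r z W" "same_module_as_std r (z + 1) W" "poly (ac_poly (l r)) z \<noteq> 0"
  shows "matrix_regular_at r Mrat z"
  unfolding matrix_regular_at_def
proof (intro allI impI)
  fix i j assume i: "i < r" and j: "j < r"
  have "\<forall>k<r. Sact l r (W i) k \<in> loc_ring z"
    using same_module_as_std_coords[OF assms(2) i] assms(3) by (auto intro: Sact_loc_ring)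
  then obtain c where c: "\<forall>k<r. c k \<in> loc_ring z" "eqA r (Sact l r (W i)) (comb r c W)"
    using same_module_as_stdD[OF assms(1)] by blast
  have "eqA r (comb r (Mrat i) W) (comb r c W)"
    using c(2) SW i by (simp add: eqA_def Mrat_def[abs_def])
  hence "Mrat i j = c j" using j by (rule comb_unique)
  thus "Mrat i j \<in> loc_ring z" using c(1) j by simp
qed

text \<open>Row \<open>j\<close> of \<open>N\<close> consists of the \<open>\<sigma>\<close>-shifted coordinates of \<open>S\<^sup>-\<^sup>1 \<omega>\<^sub>j\<close>, so it suffices to find
  \<open>S\<^sup>-\<^sup>1 \<omega>\<^sub>j\<close> in the \<open>C(x)\<^sub>z\<^sub>+\<^sub>1\<close>-span of \<open>W\<close>.\<close>

lemma Minv_regular_of_preimages: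
  assumes "\<And>j. j < r \<Longrightarrow> \<exists>h d. (\<forall>i<r. d i \<in> loc_ring (z + 1)) \<and> eqA r h (comb r d W)
                                  \<and> eqA r (Sact l r h) (W j)"
  shows "matrix_regular_at r Minv z"
  unfolding matrix_regular_at_def
proof (intro allI impI)
  fix j i' assume j: "j < r" and i': "i' < r"
  obtain h d where hd: "\<forall>i<r. d i \<in> loc_ring (z + 1)" "eqA r h (comb r d W)" "eqA r (Sact l r h) (W j)"
    using assms j by blast
  have "eqA r (Sact l r h) (Sact l r (comb r d W))" using Sact_eqA[OF r_pos hd(2)] .
  hence "eqA r (comb r (\<lambda>m. \<Sum>i<r. shiftf 1 (d i) * Mrat i m) W) (comb r (\<lambda>i. if i = j then 1 else 0) W)"
    using hd(3) j by (simp add: eqA_def Sact_comb_W comb_unit_vector)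
  hence dl: "m < r \<Longrightarrow> (\<Sum>i<r. shiftf 1 (d i) * Mrat i m) = (if m = j then 1 else 0)" for m
    by (rule comb_unique)
  have "Minv j i' = (\<Sum>m<r. (if m = j then 1 else 0) * Minv m i')"
    using j by (simp add: sum_unit_vector_left)
  also have "\<dots> = (\<Sum>m<r. (\<Sum>i<r. shiftf 1 (d i) * Mrat i m) * Minv m i')"
    by (rule sum.cong) (simp_all add: dl)
  also have "\<dots> = shiftf 1 (d i')"
    by (rule Mrat_Minv_cancel[OF i'])
  finally show "Minv j i' \<in> loc_ring z"
    using hd(1) i' by (simp add: loc_ring_shiftf[of _ z 1, simplified])
qed

lemma Minv_regular_std:
  assumes "same_module_as_std r z W" "same_module_as_std r (z + 1) W" "poly (ac_poly (l 0)) z \<noteq> 0"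
  shows "matrix_regular_at r Minv z"
proof (rule Minv_regular_of_preimages)
  fix j assume j: "j < r"
  have "\<forall>k<r. Sinv l r (W j) k \<in> loc_ring (z + 1)"
    using same_module_as_std_coords[OF assms(1) j] assms(3) r_pos by (auto intro: Sinv_loc_ring)
  then obtain d where "\<forall>i<r. d i \<in> loc_ring (z + 1)" "eqA r (Sinv l r (W j)) (comb r d W)"
    using same_module_as_stdD[OF assms(2)] by blast
  moreover have "eqA r (Sact l r (Sinv l r (W j))) (W j)"
    unfolding eqA_def using L0 Lr by (simp add: Sact_Sinv)
  ultimately show "\<exists>h d. (\<forall>i<r. d i \<in> loc_ring (z + 1)) \<and> eqA r h (comb r d W) \<and> eqA r (Sact l r h) (W j)"
    by blast
qed

lemma Minv_regular_integral:
  assumes "\<forall>j<r. integral_at l r z (W j)" "local_integral_basis l r (z + 1) W"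
  shows "matrix_regular_at r Minv z"
proof (rule Minv_regular_of_preimages)
  fix j assume j: "j < r"
  have SSinv: "eqA r (Sact l r (Sinv l r (W j))) (W j)"
    unfolding eqA_def using L0 Lr by (simp add: Sact_Sinv)
  hence "eqA r (W j) (Sact l r (Sinv l r (W j)))" by (simp add: eqA_def)
  hence "integral_at l r z (Sact l r (Sinv l r (W j)))"
    using integral_at_cong assms(1) j by blast
  hence "integral_at l r (z + 1) (Sinv l r (W j))" by (rule integral_at_Sact_imp[of l r, OF Lr r_pos])
  then obtain d where "\<forall>i<r. d i \<in> loc_ring (z + 1)" "eqA r (Sinv l r (W j)) (comb r d W)"
    using assms(2) unfolding local_integral_basis_def by blast
  thus "\<exists>h d. (\<forall>i<r. d i \<in> loc_ring (z + 1)) \<and> eqA r h (comb r d W) \<and> eqA r (Sact l r h) (W j)"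
    using SSinv by blast
qed

end

lemma basis_integral_at_std:
  assumes "same_module_as_std r z W" "j < r"
    and "\<forall>n::int. n < 0 \<longrightarrow> poly (ac_poly (l r)) (z + of_int n) \<noteq> 0"
  shows "integral_at l r z (W j)"
  using assms same_module_as_std_coords by (intro integral_at_if_loc_ring) auto

section \<open>Suitable bases\<close>

locale suitable_setup = shift_matrix l r W e et M Mt
  for l :: "nat \<Rightarrow> 'c::{field_char_0,field_gcd} poly" and r W e et M Mt +
  fixes I :: nat and \<beta> :: "nat \<Rightarrow> 'c alg_closure" and p :: "nat \<Rightarrow> 'c poly"
  assumes betas: "admissible_betas l r I \<beta>"
    and suit: "suitable_basis l r I \<beta> W"
    and minp: "\<forall>i<I. is_min_poly (\<beta> i) (p i)"
begin

abbreviation "R \<equiv> rootsL l r"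

lemma finite_rootsL: "finite R"
  using L0 Lr unfolding rootsL_def by (intro poly_roots_finite) (simp add: ac_poly_eq_0_iff)

lemma rootsL_iff: "z \<in> R \<longleftrightarrow> poly (ac_poly (l 0)) z = 0 \<or> poly (ac_poly (l r)) z = 0"
  by (simp add: rootsL_def ac_poly_mult)

lemma rootsL_shiftp_iff: "poly (ac_poly (shiftp n (l 0 * l r))) z = 0 \<longleftrightarrow> z + of_int n \<in> R"
  by (simp add: poly_ac_poly_shiftp rootsL_def)

lemma beta_orbit_meets_roots: "i < I \<Longrightarrow> \<exists>\<rho>\<in>R. same_orbit \<rho> (\<beta> i)"
  and root_orbit_meets_beta: "\<rho> \<in> R \<Longrightarrow> \<exists>i<I. same_orbit \<rho> (\<beta> i)"
  and beta_orbits_distinct: "i < I \<Longrightarrow> j < I \<Longrightarrow> same_orbit (\<beta> i) (\<beta> j) \<Longrightarrow> i = j"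
  and orbit_max_le_beta: "i < I \<Longrightarrow> orb_le (orbit_max R (\<beta> i)) (\<beta> i)"
  and conjugate_orbit_max_offset: "i < I \<Longrightarrow> i' < I \<Longrightarrow>
     C_conjugate (orbit_max R (\<beta> i)) (orbit_max R (\<beta> i')) \<Longrightarrow>
     \<beta> i - orbit_max R (\<beta> i) = \<beta> i' - orbit_max R (\<beta> i')"
  using betas unfolding admissible_betas_def Let_def by blast+

lemma local_integral_basis_Zset: "z \<in> Zset l r I \<beta> \<Longrightarrow> local_integral_basis l r z W"
  and same_module_outside_Zset: "z \<notin> Zset l r I \<beta> \<Longrightarrow> same_module_as_std r z W"
  using suit unfolding suitable_basis_def by blast+

lemma beta_orbit_structure:
  assumes i: "i < I"
  obtains u v where "v \<le> u" "u \<le> 0" "\<And>n. \<beta> i + of_int n \<in> R \<Longrightarrow> v \<le> n \<and> n \<le> u"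
    "\<beta> i + of_int u \<in> R" "orbit_max R (\<beta> i) = \<beta> i + of_int u"
    "\<And>n. \<beta> i + of_int n \<in> Zset l r I \<beta> \<longleftrightarrow> v < n \<and> n \<le> 0"
proof -
  obtain v u where vu: "orbit_min R (\<beta> i) = \<beta> i + of_int v" "orbit_max R (\<beta> i) = \<beta> i + of_int u"
    "\<beta> i + of_int v \<in> R" "\<beta> i + of_int u \<in> R" "\<And>n. \<beta> i + of_int n \<in> R \<Longrightarrow> v \<le> n \<and> n \<le> u"
    using orbit_extrema[OF finite_rootsL beta_orbit_meets_roots[OF i]] by blast
  have "u \<le> 0" using orbit_max_le_beta[OF i] vu(2) orb_le_add_of_int[of "\<beta> i" u 0] by simp
  moreover have "\<beta> i + of_int n \<in> Zset l r I \<beta> \<longleftrightarrow> v < n \<and> n \<le> 0" for n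
  proof
    assume "\<beta> i + of_int n \<in> Zset l r I \<beta>"
    then obtain i' where i': "i' < I" "same_orbit (\<beta> i + of_int n) (\<beta> i')"
      "orb_lt (orbit_min R (\<beta> i')) (\<beta> i + of_int n)" "orb_le (\<beta> i + of_int n) (\<beta> i')"
      unfolding Zset_def by blast
    have "i' = i" using beta_orbits_distinct[OF i i'(1)] i'(2) by (simp add: same_orbit_add_of_int)
    thus "v < n \<and> n \<le> 0"
      using i' vu(1) orb_lt_add_of_int[of "\<beta> i" v n] orb_le_add_of_int[of "\<beta> i" n 0] by simp
  next
    assume "v < n \<and> n \<le> 0"
    thus "\<beta> i + of_int n \<in> Zset l r I \<beta>"
      unfolding Zset_def using i vu(1) orb_lt_add_of_int[of "\<beta> i" v n] orb_le_add_of_int[of "\<beta> i" n 0]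
      by (auto simp: same_orbit_iff)
  qed
  moreover have "v \<le> u" using vu(5)[OF vu(4)] by simp
  ultimately show thesis using vu by (intro that[where u=u and v=v]) auto
qed

text \<open>A root \<open>\<gamma>\<close> of \<open>p\<^sub>i\<close> is \<open>C\<close>-conjugate to \<open>\<beta>\<^sub>i\<close>, so the roots of \<open>\<ell>\<^sub>0 \<ell>\<^sub>r\<close> in \<open>\<gamma> + \<int>\<close> are
  those of \<open>\<beta>\<^sub>i + \<int>\<close> moved by \<open>\<gamma> - \<beta>\<^sub>i\<close>; hence the orbit maxima are conjugate and
  admissibility forces the \<open>\<beta>\<close> of the orbit of \<open>\<gamma>\<close> to be \<open>\<gamma>\<close> itself.\<close>

lemma min_poly_root_is_beta:
  assumes i: "i < I" and \<gamma>: "poly (ac_poly (p i)) \<gamma> = 0"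
  obtains i' where "i' < I" "\<beta> i' = \<gamma>"
proof -
  obtain u v where uv: "\<And>n. \<beta> i + of_int n \<in> R \<Longrightarrow> v \<le> n \<and> n \<le> u"
     "\<beta> i + of_int u \<in> R" "orbit_max R (\<beta> i) = \<beta> i + of_int u"
    using beta_orbit_structure[OF i] by metis
  have mp: "is_min_poly (\<beta> i) (p i)" using minp i by blast
  have mp\<gamma>: "is_min_poly \<gamma> (p i)" using min_poly_of_root[OF mp \<gamma>] .
  have root_transfer: "\<beta> i + of_int n \<in> R \<longleftrightarrow> \<gamma> + of_int n \<in> R" for n
    using min_poly_root_transfer[OF mp _ \<gamma>] min_poly_root_transfer[OF mp\<gamma> _ mp[unfolded is_min_poly_def, THEN conjunct2, THEN conjunct1]]
    by (metis rootsL_shiftp_iff)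
  obtain i' where i': "i' < I" "same_orbit (\<gamma> + of_int u) (\<beta> i')"
    using root_orbit_meets_beta uv(2) root_transfer by blast
  have "orbit_max R (\<beta> i') = \<gamma> + of_int u"
  proof (rule orbit_max_eqI)
    show "\<gamma> + of_int u \<in> R" "same_orbit (\<gamma> + of_int u) (\<beta> i')" using uv(2) root_transfer i'(2) by auto
    fix \<rho> assume "\<rho> \<in> R" "same_orbit \<rho> (\<beta> i')"
    then obtain n where "\<rho> = \<gamma> + of_int n" "\<gamma> + of_int n \<in> R"
      using same_orbit_right_cong[OF i'(2)] same_orbit_iff same_orbit_add_of_int by metis
    thus "orb_le \<rho> (\<gamma> + of_int u)" using uv(1) root_transfer by (simp add: orb_le_add_of_int)
  qed
  moreover have "C_conjugate (\<beta> i + of_int u) (\<gamma> + of_int u)"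
    unfolding C_conjugate_def using min_poly_shiftp[OF mp, of "-u"] min_poly_shiftp[OF mp\<gamma>, of "-u"] by auto
  ultimately have "\<beta> i - orbit_max R (\<beta> i) = \<beta> i' - (\<gamma> + of_int u)"
    using conjugate_orbit_max_offset[OF i i'(1)] uv(3) by simp
  hence "\<beta> i' = \<gamma>" using uv(3) by (simp add: algebra_simps)
  thus thesis using i'(1) that by blast
qed

lemma Minv_regular_below_beta:
  assumes i: "i < I" and j: "1 \<le> j"
  shows "matrix_regular_at r Minv (\<beta> i - of_nat j)"
proof -
  obtain u v where uv: "v \<le> u" "u \<le> 0" "\<And>n. \<beta> i + of_int n \<in> R \<Longrightarrow> v \<le> n \<and> n \<le> u"
     "\<And>n. \<beta> i + of_int n \<in> Zset l r I \<beta> \<longleftrightarrow> v < n \<and> n \<le> 0"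
    using beta_orbit_structure[OF i] by metis
  define n where "n = - int j"
  define z where "z = \<beta> i + of_int n"
  have n1: "n \<le> -1" using j by (simp add: n_def)
  consider "n + 1 \<le> v" | "n = v" | "v < n" by linarith
  hence "matrix_regular_at r Minv z"
  proof cases
    case 1
    hence "z \<notin> Zset l r I \<beta>" "z + 1 \<notin> Zset l r I \<beta>" "z \<notin> R"
      using uv(3)[of n] uv(4)[of n] uv(4)[of "n + 1"] by (auto simp: z_def add.assoc)
    thus ?thesis using same_module_outside_Zset rootsL_iff by (intro Minv_regular_std) auto
  next
    case 2
    hence zN: "z \<notin> Zset l r I \<beta>" and "z + 1 \<in> Zset l r I \<beta>"
      using uv(4)[of n] uv(4)[of "n + 1"] n1 by (auto simp: z_def add.assoc)
    moreover have "\<forall>n'::int. n' < 0 \<longrightarrow> poly (ac_poly (l r)) (z + of_int n') \<noteq> 0"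
    proof (intro allI impI)
      fix n' :: int assume "n' < 0"
      hence "\<beta> i + of_int (n + n') \<notin> R" using uv(3)[of "n + n'"] 2 by auto
      thus "poly (ac_poly (l r)) (z + of_int n') \<noteq> 0" unfolding z_def rootsL_iff by (simp add: add.assoc)
    qed
    ultimately show ?thesis
      using same_module_outside_Zset[OF zN] local_integral_basis_Zset
      by (intro Minv_regular_integral basis_integral_at_std allI impI) auto
  next
    case 3
    hence "z \<in> Zset l r I \<beta>" "z + 1 \<in> Zset l r I \<beta>"
      using uv(4)[of n] uv(4)[of "n + 1"] n1 by (auto simp: z_def add.assoc)
    hence "local_integral_basis l r z W" "local_integral_basis l r (z + 1) W"
      using local_integral_basis_Zset by auto
    thus ?thesis by (intro Minv_regular_integral) (auto simp: local_integral_basis_def)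
  qed
  thus ?thesis by (simp add: z_def n_def)
qed

lemma Mrat_regular_above_beta:
  assumes i: "i < I" and j: "1 \<le> j"
  shows "matrix_regular_at r Mrat (\<beta> i + of_nat j)"
proof -
  obtain u v where uv: "v \<le> u" "u \<le> 0" "\<And>n. \<beta> i + of_int n \<in> R \<Longrightarrow> v \<le> n \<and> n \<le> u"
     "\<And>n. \<beta> i + of_int n \<in> Zset l r I \<beta> \<longleftrightarrow> v < n \<and> n \<le> 0"
    using beta_orbit_structure[OF i] by metis
  have "\<beta> i + of_int (int j) \<notin> Zset l r I \<beta>" "\<beta> i + of_int (int j + 1) \<notin> Zset l r I \<beta>"
    "\<beta> i + of_int (int j) \<notin> R"
    using uv(2) uv(3)[of "int j"] uv(4)[of "int j"] uv(4)[of "int j + 1"] j by auto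
  thus ?thesis using same_module_outside_Zset rootsL_iff by (intro Mrat_regular_std) (auto simp: add.assoc)
qed

lemma regular_off_beta_orbits:
  assumes "\<And>i. i < I \<Longrightarrow> \<not> same_orbit z (\<beta> i)"
  shows "matrix_regular_at r Minv z" "matrix_regular_at r Mrat z"
proof -
  have "z \<notin> Zset l r I \<beta>" "z + 1 \<notin> Zset l r I \<beta>" "z \<notin> R"
    using assms same_orbit_add_of_int[of z 1] root_orbit_meets_beta unfolding Zset_def by force+
  thus "matrix_regular_at r Minv z" "matrix_regular_at r Mrat z"
    using same_module_outside_Zset rootsL_iff by (auto intro: Minv_regular_std Mrat_regular_std)
qed

lemma reduction_if_coprime:
  assumes q0: "q \<noteq> 0" and cop: "\<forall>i<I. \<forall>j::int. gcd q (shiftp j (p i)) = 1"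
  shows "\<exists>g c. eqA r (fracA r (shiftp ell q) a W) (addA (Delta l r g) (fracA r (q * e * et) c W))"
proof -
  have off: "\<not> same_orbit z (\<beta> i)" if root: "poly (ac_poly q) (z + of_int s) = 0" and i: "i < I" for z s i
  proof
    assume "same_orbit z (\<beta> i)"
    then obtain k where k: "z = \<beta> i + of_int k" using same_orbit_iff by blast
    have "poly (ac_poly (shiftp (- (k + s)) (p i))) (z + of_int s) = 0"
      using minp i k by (simp add: poly_ac_poly_shiftp is_min_poly_def)
    hence "\<not> coprime q (shiftp (- (k + s)) (p i))" using root by (intro not_coprime_if_common_root)
    thus False using cop i by (simp add: coprime_iff_gcd_eq_1)
  qed
  show ?thesis
  proof (rule reduction_of_shifted_denominator[OF q0])
    fix j :: nat and z
    assume "poly (ac_poly (shiftp (int j) q)) z = 0"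
    hence "poly (ac_poly q) (z + of_int (int j)) = 0" by (simp add: poly_ac_poly_shiftp)
    thus "matrix_regular_at r Minv z" using off regular_off_beta_orbits by blast
  next
    fix j :: nat and z
    assume "poly (ac_poly (shiftp (- int j) q)) z = 0"
    hence "poly (ac_poly q) (z + of_int (- int j)) = 0" by (simp add: poly_ac_poly_shiftp)
    thus "matrix_regular_at r Mrat z" using off regular_off_beta_orbits by blast
  qed
qed

lemma reduction_if_min_poly_power:
  assumes q: "i < I" "0 < m" "q = p i ^ m"
  shows "\<exists>g c. eqA r (fracA r (shiftp ell q) a W) (addA (Delta l r g) (fracA r (q * e * et) c W))"
proof -
  have q0: "q \<noteq> 0" using q minp min_poly_nonzero by auto
  have root: "poly (ac_poly (p i)) (z + of_int k) = 0" if "poly (ac_poly (shiftp k q)) z = 0" for k z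
    using that q by (simp add: poly_ac_poly_shiftp ac_poly_power)
  show ?thesis
  proof (rule reduction_of_shifted_denominator[OF q0])
    fix j :: nat and z
    assume j: "1 \<le> j" and "poly (ac_poly (shiftp (int j) q)) z = 0"
    hence "poly (ac_poly (p i)) (z + of_nat j) = 0" using root by fastforce
    then obtain i' where "i' < I" "\<beta> i' = z + of_nat j" by (rule min_poly_root_is_beta[OF q(1)])
    thus "matrix_regular_at r Minv z" using Minv_regular_below_beta[of i' j] j by auto
  next
    fix j :: nat and z
    assume j: "1 \<le> j" and "poly (ac_poly (shiftp (- int j) q)) z = 0"
    hence "poly (ac_poly (p i)) (z - of_nat j) = 0" using root by fastforce
    then obtain i' where "i' < I" "\<beta> i' = z - of_nat j" by (rule min_poly_root_is_beta[OF q(1)])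
    thus "matrix_regular_at r Mrat z" using Mrat_regular_above_beta[of i' j] j by auto
  qed
qed

end

theorem mainTheorem7:
  fixes l :: "nat \<Rightarrow> 'c::{field_char_0,field_gcd} poly" and r I :: nat
    and \<beta> :: "nat \<Rightarrow> 'c alg_closure" and W :: "nat \<Rightarrow> 'c elt"
    and e et :: "'c poly" and M Mt :: "nat \<Rightarrow> nat \<Rightarrow> 'c poly"
    and p :: "nat \<Rightarrow> 'c poly" and q :: "'c poly" and a :: "nat \<Rightarrow> 'c poly" and ell :: int
  assumes L0: "l 0 \<noteq> 0" and Lr: "l r \<noteq> 0"
    and betas: "admissible_betas l r I \<beta>"
    and suit: "suitable_basis l r I \<beta> W"
    and SW: "\<forall>i<r. eqA r (Sact l r (W i)) (comb r (\<lambda>j. polyf (M i j) / polyf e) W)"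
    and inv1: "\<forall>i<r. \<forall>j<r. (\<Sum>k<r. (polyf (M i k) / polyf e) * (polyf (Mt k j) / polyf et))
                  = (if i = j then 1 else 0)"
    and inv2: "\<forall>i<r. \<forall>j<r. (\<Sum>k<r. (polyf (Mt i k) / polyf et) * (polyf (M k j) / polyf e))
                  = (if i = j then 1 else 0)"
    and minp: "\<forall>i<I. is_min_poly (\<beta> i) (p i)"
  shows "((\<forall>i<I. \<forall>j::int. gcd q (shiftp j (p i)) = 1) \<longrightarrow>
            (\<exists>g c. eqA r (fracA r (shiftp ell q) a W) (addA (Delta l r g) (fracA r (q * e * et) c W))))
       \<and> ((\<exists>i<I. \<exists>m::nat. m > 0 \<and> q = p i ^ m) \<longrightarrow>
            (\<exists>g c. eqA r (fracA r (shiftp ell q) a W) (addA (Delta l r g) (fracA r (q * e * et) c W))))"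
proof (cases "r = 0 \<or> q = 0")
  case True
  hence "eqA r (fracA r (shiftp ell q) a W) (addA (Delta l r (\<lambda>_. 0)) (fracA r (q * e * et) (\<lambda>_. 0) W))"
    by (auto simp: eqA_def addA_def fracA_def Delta_zero)
  thus ?thesis by blast
next
  case False
  then interpret suitable_setup l r W e et M Mt I \<beta> p
    using assms by unfold_locales (auto simp: suitable_basis_def)
  show ?thesis using False reduction_if_coprime reduction_if_min_poly_power by blast
qed

end
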